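(* Let $\alpha\in(0,1)$ and let $\mathbb{Z}$ act on the circle $\mathbb{T}^1=\mathbb{R}/\mathbb{Z}$ by $n.z=z+n\alpha$. Then the warped cone $(t\mathbb{T}^1,d_{\mathbb{Z}})_{t>0}$ is quasi-isometric to the family of tori $(\mathbb{T}^2,\tau d)_{\tau>0}$ if and only if $\alpha$ is a restricted irrational number.
   Context: $\mathbb{T}^1$ carries its standard quotient metric $d$ (circumference $1$) and $\mathbb{T}^2=\mathbb{R}^2/\mathbb{Z}^2$ its standard flat metric $d$; $\tau d$ denotes the metric scaled by $\tau$. $\mathbb{Z}$ is generated by $S=\{\pm1\}$. For $t>0$, $d_{\mathbb{Z}}$ is the largest metric on $\mathbb{T}^1$ with $d_{\mathbb{Z}}(z,z')\le t\,d(z,z')$ and $d_{\mathbb{Z}}(z,z\pm\alpha)\le 1$. Families $\mathcal{X},\mathcal{Y}$ of metric spaces are quasi-isometric if there are an index set $I$, surjections $i\mapsto X_i\in\mathcal{X}$, $i\mapsto Y_i\in\mathcal{Y}$, and maps $f_i:X_i\to Y_i$ which are $(C,A)$-quasi-isometries (i.e. $C^{-1}d-A\le d(f_i\cdot,f_i\cdot)\le Cd+A$ and $A$-neighbourhood of the image is everything) with $C,A$ independent of $i$. An irrational number $\alpha=[a_0;a_1,a_2,\dots]$ (continued fraction expansion) is restricted if the sequence $(a_i)$ is bounded. *)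

theory Defs
  imports "HOL-Analysis.Analysis"
begin

text \<open>The circle T^1 = R/Z is represented by the carrier {0..<1} of real numbers;
  a point x of R is identified with its class frac x.\<close>

definition T1 :: "real set" where
  "T1 = {0..<1}"

definition T2 :: "(real \<times> real) set" where
  "T2 = {0..<1} \<times> {0..<1}"

definition dT1 :: "real \<Rightarrow> real \<Rightarrow> real" where
  "dT1 x y = (INF k\<in>(\<int>::real set). \<bar>x - y - k\<bar>)"

definition dT2 :: "real \<times> real \<Rightarrow> real \<times> real \<Rightarrow> real" where
  "dT2 p q = sqrt ((dT1 (fst p) (fst q))\<^sup>2 + (dT1 (snd p) (snd q))\<^sup>2)"

definition metric_on :: "'a set \<Rightarrow> ('a \<Rightarrow> 'a \<Rightarrow> real) \<Rightarrow> bool" where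
  "metric_on S \<rho> \<longleftrightarrow>
     (\<forall>x\<in>S. \<forall>y\<in>S. 0 \<le> \<rho> x y \<and> (\<rho> x y = 0 \<longleftrightarrow> x = y) \<and> \<rho> x y = \<rho> y x) \<and>
     (\<forall>x\<in>S. \<forall>y\<in>S. \<forall>z\<in>S. \<rho> x z \<le> \<rho> x y + \<rho> y z)"

definition warp_admissible :: "real \<Rightarrow> real \<Rightarrow> (real \<Rightarrow> real \<Rightarrow> real) \<Rightarrow> bool" where
  "warp_admissible \<alpha> t \<rho> \<longleftrightarrow> metric_on T1 \<rho> \<and>
     (\<forall>z\<in>T1. \<forall>z'\<in>T1. \<rho> z z' \<le> t * dT1 z z') \<and>
     (\<forall>z\<in>T1. \<rho> z (frac (z + \<alpha>)) \<le> 1 \<and> \<rho> z (frac (z - \<alpha>)) \<le> 1)"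

definition warped_dist :: "real \<Rightarrow> real \<Rightarrow> real \<Rightarrow> real \<Rightarrow> real" where
  "warped_dist \<alpha> t x y = (SUP \<rho>\<in>{\<rho>. warp_admissible \<alpha> t \<rho>}. \<rho> x y)"

definition quasi_isometry ::
  "'a set \<Rightarrow> ('a \<Rightarrow> 'a \<Rightarrow> real) \<Rightarrow> 'b set \<Rightarrow> ('b \<Rightarrow> 'b \<Rightarrow> real) \<Rightarrow> real \<Rightarrow> real \<Rightarrow> ('a \<Rightarrow> 'b) \<Rightarrow> bool" where
  "quasi_isometry X dX Y dY C A f \<longleftrightarrow>
     f ` X \<subseteq> Y \<and>
     (\<forall>x\<in>X. \<forall>x'\<in>X. dX x x' / C - A \<le> dY (f x) (f x') \<and> dY (f x) (f x') \<le> C * dX x x' + A) \<and>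
     (\<forall>y\<in>Y. \<exists>x\<in>X. dY (f x) y \<le> A)"

text \<open>Quasi-isometry of the warped cone family (T^1, d_Z^t)_{t>0} and the torus family
  (T^2, tau d)_{tau>0}: an index set I, surjections onto the parameter sets (hence onto the
  families), and uniform (C,A)-quasi-isometries.\<close>
definition warped_cone_QI_tori :: "real \<Rightarrow> bool" where
  "warped_cone_QI_tori \<alpha> \<longleftrightarrow>
     (\<exists>(I::(real \<times> real) set) C A. C > 0 \<and> A \<ge> 0 \<and>
        fst ` I = {0<..} \<and> snd ` I = {0<..} \<and>
        (\<forall>(t,\<tau>)\<in>I. \<exists>f. quasi_isometry T1 (warped_dist \<alpha> t) T2 (\<lambda>p q. \<tau> * dT2 p q) C A f))"

text \<open>Continued fraction expansion alpha = [a0; a1, a2, ...]: complete quotients and partial quotients.\<close>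
fun cf_rem :: "real \<Rightarrow> nat \<Rightarrow> real" where
  "cf_rem x 0 = x"
| "cf_rem x (Suc n) = 1 / frac (cf_rem x n)"

definition cf_coeff :: "real \<Rightarrow> nat \<Rightarrow> int" where
  "cf_coeff x n = \<lfloor>cf_rem x n\<rfloor>"

definition restricted_irrational :: "real \<Rightarrow> bool" where
  "restricted_irrational \<alpha> \<longleftrightarrow> \<alpha> \<notin> \<rat> \<and> (\<exists>B. \<forall>n. \<bar>cf_coeff \<alpha> n\<bar> \<le> B)"

end

theory Submission
  imports Defs
begin

text \<open>If \<open>\<alpha>\<close> is restricted, let \<open>t = s\<^sup>2\<close> and pick consecutive convergent denominators
  \<open>q \<le> s < q'\<close> of \<open>\<alpha>\<close>; bounded partial quotients give \<open>q' = O(s)\<close>. Then \<open>x \<mapsto> (q x, q' x)\<close> is a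
  uniform quasi-isometry from the warped circle to the torus scaled by \<open>s\<close>.

  Conversely, if \<open>t |n \<alpha> - p| \<le> n\<close>, the warped circle is, up to an additive error \<open>O(n)\<close>, a circle
  of length \<open>t/n\<close> wound \<open>n\<close> times, and a packing argument shows that a circle of length \<open>L\<close> is
  uniformly quasi-isometric to a flat torus only if \<open>L\<close> is bounded by a multiple of the additive
  error. A rational \<open>\<alpha> = a/b\<close> allows \<open>t \<rightarrow> \<infinity>\<close> with \<open>n = b\<close>; with \<open>n = q\<^sub>k\<close> one gets
  \<open>t/n = 1/|q\<^sub>k \<alpha> - p\<^sub>k| \<ge> a\<^sub>k\<^sub>+\<^sub>1 q\<^sub>k\<close>, so the partial quotients are bounded.\<close>

section \<open>Distance to the nearest integer\<close>

definition dist_int :: "real \<Rightarrow> real" where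
  "dist_int z = \<bar>z - of_int (round z)\<bar>"

lemma dist_int_le: "k \<in> \<int> \<Longrightarrow> dist_int z \<le> \<bar>z - k\<bar>"
  unfolding dist_int_def by (metis Ints_cases round_diff_minimal)

lemma dist_int_nonneg: "0 \<le> dist_int z"
  by (simp add: dist_int_def)

lemma dist_int_le_half: "dist_int z \<le> 1/2"
  unfolding dist_int_def by (smt (verit, best) of_int_round_ge of_int_round_le)

lemma dist_int_minus_half: "dist_int (- (1/2)) = 1/2"
  by (simp add: dist_int_def round_def)

lemma dist_int_le_abs: "dist_int z \<le> \<bar>z\<bar>"
  using dist_int_le[of 0 z] by simp

lemma dT1_eq_dist_int: "dT1 x y = dist_int (x - y)"
proof -
  have "(INF k\<in>(\<int>::real set). \<bar>x - y - k\<bar>) = dist_int (x - y)"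
    unfolding image_def
    by (rule cInf_eq_minimum) (auto simp: dist_int_def intro!: dist_int_le[unfolded dist_int_def])
  then show ?thesis by (simp add: dT1_def)
qed

lemma dist_int_add_Ints: "k \<in> \<int> \<Longrightarrow> dist_int (z + k) = dist_int z"
proof -
  assume k: "k \<in> \<int>"
  have "dist_int (z + k) \<le> dist_int z"
    using dist_int_le[of "of_int (round z) + k" "z + k"] k by (auto simp: dist_int_def)
  moreover have "dist_int z \<le> dist_int (z + k)"
    using dist_int_le[of "of_int (round (z + k)) - k" z] k by (auto simp: dist_int_def)
  ultimately show ?thesis by simp
qed

lemma dist_int_diff_Ints: "k \<in> \<int> \<Longrightarrow> dist_int (z - k) = dist_int z"
  using dist_int_add_Ints[of "- k" z] by simp

lemma dist_int_uminus: "dist_int (- z) = dist_int z"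
proof -
  have "dist_int (- z) \<le> dist_int z"
    using dist_int_le[of "- of_int (round z)" "- z"] by (auto simp: dist_int_def)
  moreover have "dist_int z \<le> dist_int (- z)"
    using dist_int_le[of "- of_int (round (- z))" z] by (auto simp: dist_int_def)
  ultimately show ?thesis by simp
qed

lemma dist_int_add_le: "dist_int (z + w) \<le> dist_int z + dist_int w"
proof -
  have "dist_int (z + w) \<le> \<bar>z + w - (of_int (round z) + of_int (round w))\<bar>"
    by (rule dist_int_le) auto
  also have "\<dots> \<le> dist_int z + dist_int w"
    unfolding dist_int_def by simp
  finally show ?thesis .
qed

lemma dist_int_mult_Ints_le: "n \<in> \<int> \<Longrightarrow> dist_int (n * z) \<le> \<bar>n\<bar> * dist_int z"
proof -
  assume n: "n \<in> \<int>"
  have "dist_int (n * z) \<le> \<bar>n * z - n * of_int (round z)\<bar>"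
    by (rule dist_int_le) (use n in auto)
  also have "\<dots> = \<bar>n\<bar> * dist_int z"
    unfolding dist_int_def by (simp add: abs_mult right_diff_distrib[symmetric])
  finally show ?thesis .
qed

lemma dist_int_eq_0_iff: "dist_int z = 0 \<longleftrightarrow> z \<in> \<int>"
proof
  assume "dist_int z = 0"
  then show "z \<in> \<int>"
    unfolding dist_int_def by (metis abs_eq_0 eq_iff_diff_eq_0 Ints_of_int)
next
  assume "z \<in> \<int>"
  then show "dist_int z = 0"
    using dist_int_le[of z z] dist_int_nonneg[of z] by simp
qed

lemma dist_int_frac_diff: "dist_int (frac u - v) = dist_int (u - v)"
proof -
  have "frac u - v = (u - v) - of_int \<lfloor>u\<rfloor>"
    by (simp add: frac_def)
  then have "dist_int (frac u - v) = dist_int ((u - v) - of_int \<lfloor>u\<rfloor>)"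
    by (rule arg_cong)
  also have "\<dots> = dist_int (u - v)"
    by (rule dist_int_diff_Ints) simp
  finally show ?thesis .
qed

lemma dist_int_diff_frac: "dist_int (v - frac u) = dist_int (v - u)"
  using dist_int_frac_diff[of u v] dist_int_uminus by (metis minus_diff_eq)

lemma dist_int_frac_diff_frac: "dist_int (frac u - frac v) = dist_int (u - v)"
  using dist_int_frac_diff[of u "frac v"] dist_int_diff_frac[of u v] by simp

lemma dist_int_mult_diff_frac_add:
  "m \<in> \<int> \<Longrightarrow> dist_int (m * (z - frac (z + c))) = dist_int (m * c)"
proof -
  assume m: "m \<in> \<int>"
  have "m * (z - frac (z + c)) = - (m * c) + m * of_int \<lfloor>z + c\<rfloor>"
    by (simp add: frac_def algebra_simps)
  moreover have "dist_int (- (m * c) + m * of_int \<lfloor>z + c\<rfloor>) = dist_int (- (m * c))"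
    by (rule dist_int_add_Ints) (use m in auto)
  ultimately show ?thesis
    by (simp add: dist_int_uminus)
qed

lemma dist_int_mult_rotation_step:
  assumes "c = \<alpha> \<or> c = - \<alpha>"
  shows "dist_int (of_int m * (z - frac (z + c))) = dist_int (of_int m * \<alpha> - of_int k)"
proof -
  have "dist_int (of_int m * (z - frac (z + c))) = dist_int (of_int m * \<alpha>)"
    using assms dist_int_uminus[of "of_int m * \<alpha>"] by (auto simp: dist_int_mult_diff_frac_add)
  also have "\<dots> = dist_int (of_int m * \<alpha> - of_int k)"
    by (rule dist_int_diff_Ints[symmetric]) simp
  finally show ?thesis .
qed

lemma frac_in_T1: "frac u \<in> T1"
  by (simp add: T1_def frac_lt_1)

lemma dT1_triangle: "dT1 x z \<le> dT1 x y + dT1 y z"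
  unfolding dT1_eq_dist_int using dist_int_add_le[of "x - y" "y - z"] by simp

lemma dT1_sym: "dT1 x y = dT1 y x"
  unfolding dT1_eq_dist_int by (metis minus_diff_eq dist_int_uminus)

lemma dT1_eq_0_imp_eq:
  assumes "x \<in> T1" "y \<in> T1" "dT1 x y = 0"
  shows "x = y"
proof -
  from assms(3) have "x - y \<in> \<int>"
    by (simp add: dT1_eq_dist_int dist_int_eq_0_iff)
  then obtain k where k: "x - y = of_int k"
    by (auto elim: Ints_cases)
  from assms(1,2) have "-1 < x - y" "x - y < 1"
    by (auto simp: T1_def)
  with k have "k = 0"
    by (smt (verit) of_int_less_1_iff of_int_less_iff of_int_minus)
  with k show "x = y" by simp
qed

lemma dT2_eq_dist_int:
  "dT2 p q = sqrt ((dist_int (fst p - fst q))\<^sup>2 + (dist_int (snd p - snd q))\<^sup>2)"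
  by (simp add: dT2_def dT1_eq_dist_int)

lemma dT2_frac_frac:
  "dT2 (frac a1, frac a2) (frac b1, frac b2) = sqrt ((dist_int (a1 - b1))\<^sup>2 + (dist_int (a2 - b2))\<^sup>2)"
  by (simp add: dT2_eq_dist_int dist_int_frac_diff_frac)

lemma dT2_triangle: "dT2 p r \<le> dT2 p q + dT2 q r"
proof -
  have mono: "sqrt (x1\<^sup>2 + y1\<^sup>2) \<le> sqrt (x2\<^sup>2 + y2\<^sup>2)"
    if "0 \<le> x1" "x1 \<le> x2" "0 \<le> y1" "y1 \<le> y2" for x1 x2 y1 y2 :: real
    using that by (intro real_sqrt_le_mono add_mono power_mono) auto
  have norm_triangle: "sqrt ((a + b)\<^sup>2 + (c + d)\<^sup>2) \<le> sqrt (a\<^sup>2 + c\<^sup>2) + sqrt (b\<^sup>2 + d\<^sup>2)"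
    for a b c d :: real
    using norm_triangle_ineq[of "(a, c)" "(b, d)"] by (simp add: norm_Pair)
  show ?thesis
    unfolding dT2_def
    by (rule order_trans[OF mono norm_triangle])
      (use dT1_triangle in \<open>auto simp: dT1_eq_dist_int dist_int_nonneg\<close>)
qed

lemma dT2_sym: "dT2 p q = dT2 q p"
  by (simp add: dT2_def dT1_sym)

lemma dT2_nonneg: "0 \<le> dT2 p q"
  by (simp add: dT2_def)

lemma sqrt_sum_squares_le_sum: "0 \<le> a \<Longrightarrow> 0 \<le> b \<Longrightarrow> sqrt (a\<^sup>2 + b\<^sup>2) \<le> a + (b::real)"
  using real_sqrt_sum_squares_triangle_ineq[of a 0 0 b] by simp

lemma dT2_le_sum: "dT2 p q \<le> dT1 (fst p) (fst q) + dT1 (snd p) (snd q)"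
  unfolding dT2_def by (rule sqrt_sum_squares_le_sum) (auto simp: dT1_eq_dist_int dist_int_nonneg)

lemma dT2_ge_fst: "dT1 (fst p) (fst q) \<le> dT2 p q"
  unfolding dT2_def by (simp add: real_sqrt_sum_squares_ge1)

lemma dT2_ge_snd: "dT1 (snd p) (snd q) \<le> dT2 p q"
  unfolding dT2_def by (simp add: real_sqrt_sum_squares_ge2)

lemma dT2_le_1: "dT2 p q \<le> 1"
  using dT2_le_sum[of p q] dist_int_le_half[of "fst p - fst q"] dist_int_le_half[of "snd p - snd q"]
  unfolding dT1_eq_dist_int by linarith

section \<open>The warped metric\<close>

definition trunc_metric :: "real \<Rightarrow> real \<Rightarrow> real \<Rightarrow> real" where
  "trunc_metric t x y = min (t * dT1 x y) 1"

definition warp_admissible_pseudo :: "real \<Rightarrow> real \<Rightarrow> (real \<Rightarrow> real \<Rightarrow> real) \<Rightarrow> bool" where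
  "warp_admissible_pseudo \<alpha> t \<rho> \<longleftrightarrow>
     (\<forall>x\<in>T1. \<forall>y\<in>T1. 0 \<le> \<rho> x y \<and> \<rho> x y = \<rho> y x) \<and>
     (\<forall>x\<in>T1. \<forall>y\<in>T1. \<forall>z\<in>T1. \<rho> x z \<le> \<rho> x y + \<rho> y z) \<and>
     (\<forall>z\<in>T1. \<forall>z'\<in>T1. \<rho> z z' \<le> t * dT1 z z') \<and>
     (\<forall>z\<in>T1. \<rho> z (frac (z + \<alpha>)) \<le> 1 \<and> \<rho> z (frac (z - \<alpha>)) \<le> 1)"

lemma warp_admissible_trunc_metric:
  assumes "t > 0"
  shows "warp_admissible \<alpha> t (trunc_metric t)"
proof -
  have nonneg: "0 \<le> t * dT1 a b" for a b
    using assms by (simp add: dT1_eq_dist_int dist_int_nonneg)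
  have "t * dT1 x z \<le> t * dT1 x y + t * dT1 y z" for x y z
    using dT1_triangle[of x z y] assms by (simp add: distrib_left[symmetric])
  then have triangle: "trunc_metric t x z \<le> trunc_metric t x y + trunc_metric t y z" for x y z
    using nonneg unfolding trunc_metric_def by (smt (verit))
  have definite: "trunc_metric t x y = 0 \<longleftrightarrow> x = y" if "x \<in> T1" "y \<in> T1" for x y
  proof
    assume "trunc_metric t x y = 0"
    then have "dT1 x y = 0"
      using assms unfolding trunc_metric_def by (simp add: min_def split: if_splits)
    then show "x = y"
      using dT1_eq_0_imp_eq[OF that] by simp
  qed (simp add: trunc_metric_def dT1_eq_dist_int dist_int_def)
  have "trunc_metric t x y = trunc_metric t y x" "0 \<le> trunc_metric t x y"
    "trunc_metric t x y \<le> t * dT1 x y" "trunc_metric t x y \<le> 1" for x y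
    using nonneg by (simp_all add: trunc_metric_def dT1_sym)
  then show ?thesis
    unfolding warp_admissible_def metric_on_def using triangle definite by blast
qed

lemma warp_admissible_imp_pseudo: "warp_admissible \<alpha> t \<rho> \<Longrightarrow> warp_admissible_pseudo \<alpha> t \<rho>"
  by (simp add: warp_admissible_def warp_admissible_pseudo_def metric_on_def)

lemma admissible_le_warped_dist:
  assumes "warp_admissible \<alpha> t \<rho>" "x \<in> T1" "y \<in> T1"
  shows "\<rho> x y \<le> warped_dist \<alpha> t x y"
  unfolding warped_dist_def
  by (rule cSUP_upper) (use assms in \<open>auto simp: bdd_above_def warp_admissible_def\<close>)

lemma warped_dist_nonneg:
  assumes "t > 0" "x \<in> T1" "y \<in> T1"
  shows "0 \<le> warped_dist \<alpha> t x y"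
proof -
  have "0 \<le> trunc_metric t x y"
    using assms(1) by (simp add: trunc_metric_def dT1_eq_dist_int dist_int_nonneg)
  also have "\<dots> \<le> warped_dist \<alpha> t x y"
    by (rule admissible_le_warped_dist[OF warp_admissible_trunc_metric[OF assms(1)] assms(2,3)])
  finally show ?thesis .
qed

lemma warp_admissible_pseudo_orbit:
  assumes "warp_admissible_pseudo \<alpha> t \<rho>" "x \<in> T1"
  shows "\<rho> x (frac (x + real i * \<alpha>)) \<le> real i \<and> \<rho> x (frac (x - real i * \<alpha>)) \<le> real i"
proof (induction i)
  case 0
  have "\<rho> x x \<le> t * dT1 x x" "0 \<le> \<rho> x x"
    using assms unfolding warp_admissible_pseudo_def by blast+
  moreover have "frac x = x"
    using assms(2) by (simp add: T1_def frac_eq)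
  ultimately show ?case
    by (simp add: dT1_eq_dist_int dist_int_def)
next
  case (Suc i)
  let ?u = "frac (x + real i * \<alpha>)" and ?v = "frac (x - real i * \<alpha>)"
  have triangle: "\<rho> x c \<le> \<rho> x b + \<rho> b c" if "b \<in> T1" "c \<in> T1" for b c
    using assms that unfolding warp_admissible_pseudo_def by blast
  have jump: "\<rho> ?u (frac (?u + \<alpha>)) \<le> 1" "\<rho> ?v (frac (?v - \<alpha>)) \<le> 1"
    using assms(1) frac_in_T1 unfolding warp_admissible_pseudo_def by blast+
  have "frac (?u + \<alpha>) = frac (x + real (Suc i) * \<alpha>)"
    by (simp add: algebra_simps)
  moreover have "frac (?v - \<alpha>) = frac (x - real (Suc i) * \<alpha>)"
    using frac_add_simps(1)[of "x - real i * \<alpha>" "- \<alpha>"] by (simp add: algebra_simps)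
  moreover have "\<rho> x (frac (?u + \<alpha>)) \<le> \<rho> x ?u + \<rho> ?u (frac (?u + \<alpha>))"
    "\<rho> x (frac (?v - \<alpha>)) \<le> \<rho> x ?v + \<rho> ?v (frac (?v - \<alpha>))"
    by (intro triangle frac_in_T1)+
  ultimately have "\<rho> x (frac (x + real (Suc i) * \<alpha>)) \<le> \<rho> x ?u + 1"
    "\<rho> x (frac (x - real (Suc i) * \<alpha>)) \<le> \<rho> x ?v + 1"
    using jump by simp_all
  then show ?case
    using Suc.IH by simp
qed

lemma warp_admissible_pseudo_jump:
  assumes "warp_admissible_pseudo \<alpha> t \<rho>" "x \<in> T1" "j \<in> \<int>"
  shows "\<rho> x (frac (x + j * \<alpha>)) \<le> \<bar>j\<bar>"
proof -
  obtain k where k: "j = of_int k"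
    using assms(3) by (auto elim: Ints_cases)
  show ?thesis
  proof (cases "k \<ge> 0")
    case True
    then show ?thesis
      using warp_admissible_pseudo_orbit[OF assms(1,2), of "nat k"] k by simp
  next
    case False
    then show ?thesis
      using warp_admissible_pseudo_orbit[OF assms(1,2), of "nat (- k)"] k by simp
  qed
qed

lemma warped_dist_le_jump:
  assumes "t > 0" "x \<in> T1" "y \<in> T1" "j \<in> \<int>"
  shows "warped_dist \<alpha> t x y \<le> \<bar>j\<bar> + t * dist_int (x + j * \<alpha> - y)"
  unfolding warped_dist_def
proof (rule cSUP_least)
  show "{\<rho>. warp_admissible \<alpha> t \<rho>} \<noteq> {}"
    using warp_admissible_trunc_metric[OF assms(1)] by auto
next
  fix \<rho> assume "\<rho> \<in> {\<rho>. warp_admissible \<alpha> t \<rho>}"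
  then have adm: "warp_admissible \<alpha> t \<rho>" and pseudo: "warp_admissible_pseudo \<alpha> t \<rho>"
    by (simp_all add: warp_admissible_imp_pseudo)
  let ?u = "frac (x + j * \<alpha>)"
  have "\<rho> x y \<le> \<rho> x ?u + \<rho> ?u y"
    using pseudo assms frac_in_T1 unfolding warp_admissible_pseudo_def by blast
  also have "\<dots> \<le> \<bar>j\<bar> + t * dT1 ?u y"
  proof (rule add_mono)
    show "\<rho> x ?u \<le> \<bar>j\<bar>"
      by (rule warp_admissible_pseudo_jump[OF pseudo assms(2,4)])
    show "\<rho> ?u y \<le> t * dT1 ?u y"
      using pseudo frac_in_T1 assms(3) unfolding warp_admissible_pseudo_def by blast
  qed
  also have "dT1 ?u y = dist_int (x + j * \<alpha> - y)"
    by (simp only: dT1_eq_dist_int dist_int_frac_diff)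
  finally show "\<rho> x y \<le> \<bar>j\<bar> + t * dist_int (x + j * \<alpha> - y)" .
qed

lemma warped_dist_le_scaled:
  assumes "t > 0" "x \<in> T1" "y \<in> T1"
  shows "warped_dist \<alpha> t x y \<le> t * dT1 x y"
  using warped_dist_le_jump[OF assms, of 0] by (simp add: dT1_eq_dist_int)

lemma warp_admissible_convex_comb:
  assumes \<rho>: "warp_admissible_pseudo \<alpha> t \<rho>" and t: "t > 0" and s: "0 < s" "s \<le> 1"
  shows "warp_admissible \<alpha> t (\<lambda>a b. (1 - s) * \<rho> a b + s * trunc_metric t a b)"
    (is "warp_admissible \<alpha> t ?\<sigma>")
proof -
  have \<mu>: "warp_admissible \<alpha> t (trunc_metric t)"
    using warp_admissible_trunc_metric[OF t] .
  have comb_le: "?\<sigma> a b \<le> (1 - s) * c + s * d"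
    if "\<rho> a b \<le> c" "trunc_metric t a b \<le> d" for a b c d
    using that s by (intro add_mono mult_left_mono) auto
  show ?thesis
    unfolding warp_admissible_def metric_on_def
  proof (intro conjI ballI)
    fix a b assume ab: "a \<in> T1" "b \<in> T1"
    have \<rho>_ab: "0 \<le> \<rho> a b" "\<rho> a b = \<rho> b a" "\<rho> a b \<le> t * dT1 a b" "\<rho> a a \<le> t * dT1 a a"
      using \<rho> ab unfolding warp_admissible_pseudo_def by blast+
    have \<mu>_ab: "0 \<le> trunc_metric t a b" "trunc_metric t a b = trunc_metric t b a"
      "trunc_metric t a b = 0 \<longleftrightarrow> a = b" "trunc_metric t a b \<le> t * dT1 a b"
      using \<mu> ab unfolding warp_admissible_def metric_on_def by blast+
    show "0 \<le> ?\<sigma> a b"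
      using \<rho>_ab(1) \<mu>_ab(1) s by simp
    show "?\<sigma> a b = ?\<sigma> b a"
      using \<rho>_ab(2) \<mu>_ab(2) by simp
    show "?\<sigma> a b \<le> t * dT1 a b"
      using comb_le[OF \<rho>_ab(3) \<mu>_ab(4)] by (simp add: algebra_simps)
    have "\<rho> a a = 0"
      using \<rho>_ab(4) \<rho> ab(1) unfolding warp_admissible_pseudo_def
      by (simp add: dT1_eq_dist_int dist_int_def) (meson order_antisym)
    moreover have "0 \<le> (1 - s) * \<rho> a b" "0 \<le> s * trunc_metric t a b"
      using \<rho>_ab(1) \<mu>_ab(1) s by simp_all
    ultimately show "?\<sigma> a b = 0 \<longleftrightarrow> a = b"
      using \<mu>_ab(3) s by (auto simp: add_nonneg_eq_0_iff)
  next
    fix a b c assume "a \<in> T1" "b \<in> T1" "c \<in> T1"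
    then have "\<rho> a c \<le> \<rho> a b + \<rho> b c"
      "trunc_metric t a c \<le> trunc_metric t a b + trunc_metric t b c"
      using \<rho> \<mu> unfolding warp_admissible_pseudo_def warp_admissible_def metric_on_def by blast+
    from comb_le[OF this] show "?\<sigma> a c \<le> ?\<sigma> a b + ?\<sigma> b c"
      by (simp add: algebra_simps)
  next
    fix z assume "z \<in> T1"
    then have "\<rho> z (frac (z + \<alpha>)) \<le> 1" "\<rho> z (frac (z - \<alpha>)) \<le> 1"
      using \<rho> unfolding warp_admissible_pseudo_def by blast+
    moreover have "trunc_metric t z w \<le> 1" for w
      by (simp add: trunc_metric_def)
    ultimately show "?\<sigma> z (frac (z + \<alpha>)) \<le> 1" "?\<sigma> z (frac (z - \<alpha>)) \<le> 1"
      using comb_le[of z "frac (z + \<alpha>)" 1 1] comb_le[of z "frac (z - \<alpha>)" 1 1] by simp_all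
  qed
qed

text \<open>For \<open>0 < s \<le> 1\<close>, \<open>(1 - s) \<rho> + s \<cdot> trunc_metric t\<close> is admissible; let \<open>s \<rightarrow> 0\<close>.\<close>

lemma pseudo_admissible_le_warped_dist:
  assumes t: "t > 0" and pseudo: "warp_admissible_pseudo \<alpha> t \<rho>" and x: "x \<in> T1" and y: "y \<in> T1"
  shows "\<rho> x y \<le> warped_dist \<alpha> t x y"
proof (rule field_le_epsilon)
  fix e :: real assume e: "0 < e"
  have \<rho>0: "0 \<le> \<rho> x y"
    using pseudo x y unfolding warp_admissible_pseudo_def by blast
  define s where "s = min 1 (e / (\<rho> x y + 1))"
  have s: "0 < s" "s \<le> 1"
    using e \<rho>0 by (auto simp: s_def)
  have "(1 - s) * \<rho> x y + s * trunc_metric t x y \<le> warped_dist \<alpha> t x y"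
    using admissible_le_warped_dist[OF warp_admissible_convex_comb[OF pseudo t s] x y] .
  moreover have "0 \<le> s * trunc_metric t x y"
    using t s by (simp add: trunc_metric_def dT1_eq_dist_int dist_int_nonneg)
  moreover have "s * \<rho> x y \<le> e"
  proof -
    have "s \<le> e / (\<rho> x y + 1)"
      by (simp add: s_def)
    then have "s * (\<rho> x y + 1) \<le> e"
      using \<rho>0 by (simp add: pos_le_divide_eq)
    then show ?thesis
      using s by (simp add: algebra_simps)
  qed
  ultimately show "\<rho> x y \<le> warped_dist \<alpha> t x y + e"
    by (simp add: algebra_simps)
qed

lemma coprime_exists_residue:
  fixes p n K :: int
  assumes "coprime p n" "n \<ge> 1"
  shows "\<exists>j M. 0 \<le> j \<and> j < n \<and> j * p = K - n * M"
proof -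
  obtain u v where uv: "u * p + v * n = 1"
    using bezout_int[of p n] assms(1) by auto
  define j where "j = (u * K) mod n"
  define M where "M = K * v + (u * K) div n * p"
  have up: "u * p = 1 - v * n"
    using uv by linarith
  have "j * p = K * (u * p) - n * ((u * K) div n * p)"
    unfolding j_def minus_div_mult_eq_mod[symmetric] by (simp add: algebra_simps)
  also have "\<dots> = K - n * M"
    unfolding up M_def by (simp add: algebra_simps)
  finally show ?thesis
    using assms(2) by (intro exI[of _ j] exI[of _ M]) (simp add: j_def)
qed

text \<open>If \<open>p/n\<close> is a good enough approximation of \<open>\<alpha>\<close>, the warped metric is, up to an additive
  error \<open>2n\<close>, the metric of a circle of length \<open>t/n\<close> wrapped \<open>n\<close> times around \<open>T\<^sup>1\<close>.\<close>

lemma warp_admissible_pseudo_covering: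
  fixes n p :: int
  assumes t: "t > 0" and n: "n \<ge> 1" and approx: "t * \<bar>of_int n * \<alpha> - of_int p\<bar> \<le> of_int n"
  shows "warp_admissible_pseudo \<alpha> t (\<lambda>a b. (t / of_int n) * dist_int (of_int n * (a - b)))"
    (is "warp_admissible_pseudo \<alpha> t ?\<rho>")
  unfolding warp_admissible_pseudo_def
proof (intro conjI ballI)
  let ?n = "real_of_int n"
  have scale: "t / ?n > 0"
    using t n by simp
  fix a b
  show "0 \<le> ?\<rho> a b"
    using scale dist_int_nonneg by (intro mult_nonneg_nonneg) auto
  show "?\<rho> a b = ?\<rho> b a"
    using dist_int_uminus[of "?n * (a - b)"] by (simp add: algebra_simps)
  have "(t / ?n) * dist_int (?n * (a - b)) \<le> (t / ?n) * (?n * dist_int (a - b))"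
    using dist_int_mult_Ints_le[of ?n "a - b"] scale n by (intro mult_left_mono) auto
  then show "?\<rho> a b \<le> t * dT1 a b"
    unfolding dT1_eq_dist_int using n by simp
next
  let ?n = "real_of_int n"
  fix a b c
  have "dist_int (?n * (a - c)) \<le> dist_int (?n * (a - b)) + dist_int (?n * (b - c))"
    using dist_int_add_le[of "?n * (a - b)" "?n * (b - c)"] by (simp add: algebra_simps)
  then have "(t / ?n) * dist_int (?n * (a - c))
      \<le> (t / ?n) * (dist_int (?n * (a - b)) + dist_int (?n * (b - c)))"
    using t n by (intro mult_left_mono) auto
  then show "?\<rho> a c \<le> ?\<rho> a b + ?\<rho> b c"
    by (simp only: distrib_left)
next
  let ?n = "real_of_int n"
  have step: "?\<rho> z (frac (z + c)) \<le> 1" if "c = \<alpha> \<or> c = - \<alpha>" for z c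
  proof -
    have "(t / ?n) * dist_int (?n * (z - frac (z + c))) \<le> (t / ?n) * \<bar>?n * \<alpha> - of_int p\<bar>"
      unfolding dist_int_mult_rotation_step[OF that, of _ _ p]
      using t n dist_int_le_abs by (intro mult_left_mono) auto
    also have "\<dots> \<le> 1"
      using approx n by (simp add: field_simps)
    finally show ?thesis .
  qed
  fix z
  show "?\<rho> z (frac (z + \<alpha>)) \<le> 1" "?\<rho> z (frac (z - \<alpha>)) \<le> 1"
    using step[of \<alpha> z] step[of "- \<alpha>" z] by simp_all
qed

lemma warped_dist_ge_covering:
  fixes n p :: int
  assumes t: "t > 0" and n: "n \<ge> 1" and approx: "t * \<bar>of_int n * \<alpha> - of_int p\<bar> \<le> of_int n"
    and x: "x \<in> T1" and y: "y \<in> T1"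
  shows "(t / of_int n) * dist_int (of_int n * (x - y)) \<le> warped_dist \<alpha> t x y"
  using pseudo_admissible_le_warped_dist[OF t warp_admissible_pseudo_covering[OF t n approx] x y] .

lemma exists_residue_jump:
  fixes n p :: int
  assumes n: "n \<ge> 1" and coprime: "coprime p n"
  shows "\<exists>j. 0 \<le> j \<and> j < n \<and>
    dist_int (z + of_int j * \<alpha>) \<le> \<bar>of_int n * \<alpha> - of_int p\<bar> + dist_int (of_int n * z) / of_int n"
proof -
  let ?n = "real_of_int n"
  define \<delta> where "\<delta> = ?n * \<alpha> - of_int p"
  define K where "K = round (- ?n * z)"
  define e where "e = - ?n * z - of_int K"
  have npos: "?n > 0"
    using n by simp
  have abs_e: "\<bar>e\<bar> = dist_int (?n * z)"
    using dist_int_uminus[of "?n * z"] by (simp add: e_def K_def dist_int_def)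
  obtain j M where j: "0 \<le> j" "j < n" and jp: "j * p = K - n * M"
    using coprime_exists_residue[OF coprime n] by blast
  have "z + of_int j * \<alpha> = (of_int j * \<delta> - e) / ?n - of_int M"
  proof -
    have "of_int j * \<alpha> = (of_int (j * p) + of_int j * \<delta>) / ?n"
      using npos by (simp add: \<delta>_def field_simps)
    then show ?thesis
      using npos by (simp add: jp e_def field_simps)
  qed
  then have "dist_int (z + of_int j * \<alpha>) = dist_int ((of_int j * \<delta> - e) / ?n)"
    by (simp add: dist_int_diff_Ints)
  also have "\<dots> \<le> \<bar>of_int j * \<delta> - e\<bar> / ?n"
    using dist_int_le_abs[of "(of_int j * \<delta> - e) / ?n"] npos by (simp add: abs_divide)
  also have "\<dots> \<le> (?n * \<bar>\<delta>\<bar> + \<bar>e\<bar>) / ?n"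
  proof (rule divide_right_mono)
    have "\<bar>of_int j * \<delta>\<bar> \<le> ?n * \<bar>\<delta>\<bar>"
      using j by (simp add: abs_mult mult_right_mono)
    then show "\<bar>of_int j * \<delta> - e\<bar> \<le> ?n * \<bar>\<delta>\<bar> + \<bar>e\<bar>"
      using abs_triangle_ineq4[of "of_int j * \<delta>" e] by linarith
  qed (use npos in simp)
  finally show ?thesis
    using j npos unfolding abs_e \<delta>_def by (auto simp: add_divide_distrib)
qed

lemma warped_dist_le_covering:
  fixes n p :: int
  assumes t: "t > 0" and n: "n \<ge> 1" and coprime: "coprime p n"
    and approx: "t * \<bar>of_int n * \<alpha> - of_int p\<bar> \<le> of_int n"
    and x: "x \<in> T1" and y: "y \<in> T1"
  shows "warped_dist \<alpha> t x y \<le> (t / of_int n) * dist_int (of_int n * (x - y)) + 2 * of_int n"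
proof -
  let ?n = "real_of_int n" and ?d = "dist_int (of_int n * (x - y))"
  obtain j where j: "0 \<le> j" "j < n"
    and jump: "dist_int (x - y + of_int j * \<alpha>) \<le> \<bar>?n * \<alpha> - of_int p\<bar> + ?d / ?n"
    using exists_residue_jump[OF n coprime] by blast
  have "warped_dist \<alpha> t x y \<le> \<bar>of_int j\<bar> + t * dist_int (x + of_int j * \<alpha> - y)"
    by (rule warped_dist_le_jump[OF t x y]) simp
  also have "\<dots> \<le> ?n + t * (\<bar>?n * \<alpha> - of_int p\<bar> + ?d / ?n)"
    using j jump t by (intro add_mono mult_left_mono) (auto simp: algebra_simps)
  also have "\<dots> \<le> (t / ?n) * ?d + 2 * ?n"
    using approx by (simp add: algebra_simps)
  finally show ?thesis .
qed

section \<open>Continued fractions\<close>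

text \<open>With the shifted indexing below, \<open>cf_num \<alpha> (Suc k) / cf_den \<alpha> (Suc k)\<close> is the
  \<open>k\<close>-th convergent \<open>[a\<^sub>0; a\<^sub>1, \<dots>, a\<^sub>k]\<close>, and \<open>cf_num \<alpha> 0 / cf_den \<alpha> 0 = 1/0\<close>.\<close>

fun cf_num :: "real \<Rightarrow> nat \<Rightarrow> int" where
  "cf_num a 0 = 1"
| "cf_num a (Suc 0) = cf_coeff a 0"
| "cf_num a (Suc (Suc k)) = cf_coeff a (Suc k) * cf_num a (Suc k) + cf_num a k"

fun cf_den :: "real \<Rightarrow> nat \<Rightarrow> int" where
  "cf_den a 0 = 0"
| "cf_den a (Suc 0) = 1"
| "cf_den a (Suc (Suc k)) = cf_coeff a (Suc k) * cf_den a (Suc k) + cf_den a k"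

definition cf_err :: "real \<Rightarrow> nat \<Rightarrow> real" where
  "cf_err a k = of_int (cf_den a k) * a - of_int (cf_num a k)"

lemma abs_mult_diff_opposite_signs:
  fixes a b c d x :: real
  assumes "a = - x * b" "x > 0" "c \<ge> 0" "d \<ge> 0"
  shows "\<bar>a * c - b * d\<bar> = \<bar>a\<bar> * c + \<bar>b\<bar> * d"
proof -
  have "a * c - b * d = - b * (x * c + d)"
    using assms(1) by (simp add: algebra_simps)
  then have "\<bar>a * c - b * d\<bar> = \<bar>b\<bar> * (x * c + d)"
    using assms(2-4) by (simp add: abs_mult)
  also have "\<dots> = \<bar>a\<bar> * c + \<bar>b\<bar> * d"
    using assms by (simp add: abs_mult algebra_simps)
  finally show ?thesis .
qed

declare cf_rem.simps(2)[simp del]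

context
  fixes \<alpha> :: real
  assumes irrational: "\<alpha> \<notin> \<rat>"
begin

lemma cf_rem_not_Rats: "cf_rem \<alpha> k \<notin> \<rat>"
  using irrational by (induction k) (simp_all add: cf_rem.simps(2) divide_inverse)

lemma cf_rem_Suc_gt_1: "1 < cf_rem \<alpha> (Suc k)"
proof -
  have "cf_rem \<alpha> k \<notin> \<int>"
    using cf_rem_not_Rats[of k] Ints_subset_Rats by blast
  then have "0 < frac (cf_rem \<alpha> k)" "frac (cf_rem \<alpha> k) < 1"
    by (simp_all add: frac_lt_1)
  then show ?thesis
    by (simp add: cf_rem.simps(2))
qed

lemma cf_coeff_Suc_ge_1: "1 \<le> cf_coeff \<alpha> (Suc k)"
  using cf_rem_Suc_gt_1[of k] unfolding cf_coeff_def by (simp add: le_floor_iff)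

lemma cf_rem_minus_coeff: "cf_rem \<alpha> k - of_int (cf_coeff \<alpha> k) = 1 / cf_rem \<alpha> (Suc k)"
  by (simp add: cf_coeff_def frac_def cf_rem.simps(2))

lemma cf_err_eq: "cf_err \<alpha> k = - cf_rem \<alpha> (Suc k) * cf_err \<alpha> (Suc k)"
proof (induction k)
  case 0
  have "cf_err \<alpha> 1 = 1 / cf_rem \<alpha> 1"
    using cf_rem_minus_coeff[of 0] by (simp add: cf_err_def)
  moreover have "cf_rem \<alpha> 1 > 0"
    using cf_rem_Suc_gt_1[of 0] by simp
  ultimately show ?case
    by (simp add: cf_err_def)
next
  case (Suc k)
  have "cf_err \<alpha> (Suc (Suc k)) = (of_int (cf_coeff \<alpha> (Suc k)) - cf_rem \<alpha> (Suc k)) * cf_err \<alpha> (Suc k)"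
    using Suc.IH by (simp add: cf_err_def algebra_simps)
  also have "\<dots> = - (1 / cf_rem \<alpha> (Suc (Suc k))) * cf_err \<alpha> (Suc k)"
    using cf_rem_minus_coeff[of "Suc k"] by (simp add: algebra_simps)
  finally show ?case
    using cf_rem_Suc_gt_1[of "Suc k"] by (simp add: field_simps)
qed

lemma cf_err_nonzero: "cf_err \<alpha> k \<noteq> 0"
proof (induction k)
  case (Suc k)
  then show ?case
    using cf_err_eq[of k] by auto
qed (simp add: cf_err_def)

lemma cf_det: "cf_den \<alpha> (Suc k) * cf_num \<alpha> k - cf_den \<alpha> k * cf_num \<alpha> (Suc k) = (-1) ^ k"
proof (induction k)
  case (Suc k)
  have "cf_den \<alpha> (Suc (Suc k)) * cf_num \<alpha> (Suc k) - cf_den \<alpha> (Suc k) * cf_num \<alpha> (Suc (Suc k))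
        = - (cf_den \<alpha> (Suc k) * cf_num \<alpha> k - cf_den \<alpha> k * cf_num \<alpha> (Suc k))"
    by (simp add: algebra_simps)
  then show ?case
    using Suc.IH by simp
qed simp

lemma cf_den_nonneg_Suc_pos: "0 \<le> cf_den \<alpha> k \<and> 1 \<le> cf_den \<alpha> (Suc k)"
proof (induction k)
  case (Suc k)
  have "cf_den \<alpha> (Suc k) \<le> cf_coeff \<alpha> (Suc k) * cf_den \<alpha> (Suc k)"
    using Suc.IH cf_coeff_Suc_ge_1[of k] by (simp add: mult_le_cancel_right1)
  moreover have "cf_den \<alpha> (Suc (Suc k)) = cf_coeff \<alpha> (Suc k) * cf_den \<alpha> (Suc k) + cf_den \<alpha> k"
    by simp
  ultimately show ?case
    using Suc.IH by linarith
qed simp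

lemma cf_den_nonneg: "0 \<le> cf_den \<alpha> k"
  using cf_den_nonneg_Suc_pos by blast

lemma cf_den_Suc_pos: "1 \<le> cf_den \<alpha> (Suc k)"
  using cf_den_nonneg_Suc_pos by blast

lemma cf_den_Suc_Suc_ge: "cf_den \<alpha> (Suc k) + cf_den \<alpha> k \<le> cf_den \<alpha> (Suc (Suc k))"
  using cf_coeff_Suc_ge_1[of k] cf_den_nonneg[of "Suc k"] by (simp add: mult_le_cancel_right1)

lemma cf_den_mono: "cf_den \<alpha> k \<le> cf_den \<alpha> (Suc k)"
  using cf_den_Suc_Suc_ge[of "k - 1"] cf_den_nonneg[of "k - 1"] by (cases k) auto

lemma cf_den_Suc_ge: "int k \<le> cf_den \<alpha> (Suc k)"
proof (induction k rule: less_induct)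
  case (less k)
  show ?case
  proof (cases "k \<le> 1")
    case True
    then show ?thesis
      using cf_den_Suc_pos[of k] by auto
  next
    case False
    then obtain m where m: "k = Suc (Suc m)"
      using less_imp_Suc_add[of 1 k] by auto
    then show ?thesis
      using less.IH[of "Suc m"] cf_den_Suc_Suc_ge[of "Suc m"] cf_den_Suc_pos[of m]
      by (simp del: cf_den.simps(3))
  qed
qed

lemma cf_err_sum: "\<bar>cf_err \<alpha> k\<bar> * of_int (cf_den \<alpha> (Suc k)) + \<bar>cf_err \<alpha> (Suc k)\<bar> * of_int (cf_den \<alpha> k) = 1"
proof -
  have e: "cf_err \<alpha> k * of_int (cf_den \<alpha> (Suc k)) - cf_err \<alpha> (Suc k) * of_int (cf_den \<alpha> k)
        = - of_int (cf_den \<alpha> (Suc k) * cf_num \<alpha> k - cf_den \<alpha> k * cf_num \<alpha> (Suc k))"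
    by (simp add: cf_err_def algebra_simps)
  have "\<bar>cf_err \<alpha> k * of_int (cf_den \<alpha> (Suc k)) - cf_err \<alpha> (Suc k) * of_int (cf_den \<alpha> k)\<bar> = 1"
    unfolding e cf_det by simp
  moreover have "\<bar>cf_err \<alpha> k * of_int (cf_den \<alpha> (Suc k)) - cf_err \<alpha> (Suc k) * of_int (cf_den \<alpha> k)\<bar>
     = \<bar>cf_err \<alpha> k\<bar> * of_int (cf_den \<alpha> (Suc k)) + \<bar>cf_err \<alpha> (Suc k)\<bar> * of_int (cf_den \<alpha> k)"
    using cf_rem_Suc_gt_1[of k] cf_den_nonneg[of k] cf_den_nonneg[of "Suc k"]
    by (intro abs_mult_diff_opposite_signs[OF cf_err_eq]) auto
  ultimately show ?thesis by simp
qed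

lemma cf_den_Suc_mult_err_le: "\<bar>cf_err \<alpha> k\<bar> * of_int (cf_den \<alpha> (Suc k)) \<le> 1"
proof -
  have "0 \<le> \<bar>cf_err \<alpha> (Suc k)\<bar> * of_int (cf_den \<alpha> k)"
    using cf_den_nonneg[of k] by simp
  then show ?thesis using cf_err_sum[of k] by linarith
qed

lemma cf_den_mult_err_mult_rem_le: "of_int (cf_den \<alpha> (Suc k)) * \<bar>cf_err \<alpha> (Suc k)\<bar> * cf_rem \<alpha> (Suc k) \<le> 1"
proof -
  have "\<bar>cf_err \<alpha> k\<bar> = cf_rem \<alpha> (Suc k) * \<bar>cf_err \<alpha> (Suc k)\<bar>"
    using cf_err_eq[of k] cf_rem_Suc_gt_1[of k] by (simp add: abs_mult)
  then show ?thesis using cf_den_Suc_mult_err_le[of k] by (simp add: algebra_simps)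
qed

lemma cf_den_mult_err_le: "\<bar>cf_err \<alpha> k\<bar> * of_int (cf_den \<alpha> k) \<le> 1"
proof -
  have "\<bar>cf_err \<alpha> k\<bar> * of_int (cf_den \<alpha> k) \<le> \<bar>cf_err \<alpha> k\<bar> * of_int (cf_den \<alpha> (Suc k))"
    by (rule mult_left_mono) (simp_all only: of_int_le_iff cf_den_mono abs_ge_zero)
  then show ?thesis
    using cf_den_Suc_mult_err_le[of k] by linarith
qed

lemma cf_den_Suc_Suc_le:
  fixes B :: real
  assumes "of_int (cf_coeff \<alpha> (Suc k)) \<le> B"
  shows "of_int (cf_den \<alpha> (Suc (Suc k))) \<le> (B + 1) * of_int (cf_den \<alpha> (Suc k))"
proof -
  have "real_of_int (cf_den \<alpha> (Suc (Suc k))) = of_int (cf_coeff \<alpha> (Suc k)) * of_int (cf_den \<alpha> (Suc k)) + of_int (cf_den \<alpha> k)"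
    by simp
  also have "\<dots> \<le> B * of_int (cf_den \<alpha> (Suc k)) + of_int (cf_den \<alpha> (Suc k))"
    using assms cf_den_mono[of k] cf_den_nonneg[of k] cf_den_nonneg[of "Suc k"]
    by (intro add_mono mult_right_mono) auto
  finally show ?thesis
    by (simp add: algebra_simps)
qed

lemma coprime_cf_num_den: "coprime (cf_num \<alpha> (Suc k)) (cf_den \<alpha> (Suc k))"
proof -
  have "cf_den \<alpha> (Suc (Suc k)) * cf_num \<alpha> (Suc k) - cf_den \<alpha> (Suc k) * cf_num \<alpha> (Suc (Suc k)) = (-1) ^ Suc k"
    by (rule cf_det)
  then have unit: "is_unit (cf_den \<alpha> (Suc (Suc k)) * cf_num \<alpha> (Suc k) - cf_den \<alpha> (Suc k) * cf_num \<alpha> (Suc (Suc k)))"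
    by simp
  show ?thesis
  proof (rule coprimeI)
    fix c assume c: "c dvd cf_num \<alpha> (Suc k)" "c dvd cf_den \<alpha> (Suc k)"
    then have "c dvd cf_den \<alpha> (Suc (Suc k)) * cf_num \<alpha> (Suc k) - cf_den \<alpha> (Suc k) * cf_num \<alpha> (Suc (Suc k))"
      using dvd_diff[OF dvd_mult[OF c(1), of "cf_den \<alpha> (Suc (Suc k))"] dvd_mult2[OF c(2), of "cf_num \<alpha> (Suc (Suc k))"]]
      by (simp only: mult.commute)
    then show "is_unit c" using unit dvd_unit_imp_unit by blast
  qed
qed

end
section \<open>Circles quasi-isometric to flat tori\<close>

text \<open>Pigeonhole on the circle: sort the points into the \<open>\<lceil>1/d\<rceil>\<close> bins
  \<open>[b d, (b + 1) d)\<close> of \<open>[0, 1)\<close>; two separated points never share a bin.\<close>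

lemma card_le_if_separated_mod_1:
  fixes G :: "'a set" and \<phi> :: "'a \<Rightarrow> real"
  assumes d: "d > 0"
    and sep: "\<And>i j. i \<in> G \<Longrightarrow> j \<in> G \<Longrightarrow> i \<noteq> j \<Longrightarrow> d \<le> dist_int (\<phi> i - \<phi> j)"
  shows "real (card G) \<le> 1 / d + 1"
proof -
  define bin where "bin i = nat \<lfloor>frac (\<phi> i) / d\<rfloor>" for i
  define N where "N = nat \<lceil>1 / d\<rceil>"
  have bin_eq: "real (bin i) = of_int \<lfloor>frac (\<phi> i) / d\<rfloor>" for i
    using d by (simp add: bin_def)
  have bin_low: "real (bin i) * d \<le> frac (\<phi> i)" for i
    using of_int_floor_le[of "frac (\<phi> i) / d"] unfolding pos_le_divide_eq[OF d] bin_eq .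
  have bin_high: "frac (\<phi> i) < (real (bin i) + 1) * d" for i
    using real_of_int_floor_add_one_gt[of "frac (\<phi> i) / d"] unfolding pos_divide_less_eq[OF d] bin_eq .
  have "inj_on bin G"
  proof (rule inj_onI, rule ccontr)
    fix i j assume ij: "i \<in> G" "j \<in> G" "bin i = bin j" "i \<noteq> j"
    then have "d \<le> dist_int (frac (\<phi> i) - frac (\<phi> j))"
      using sep by (simp add: dist_int_frac_diff_frac)
    also have "\<dots> \<le> \<bar>frac (\<phi> i) - frac (\<phi> j)\<bar>"
      by (rule dist_int_le_abs)
    also have "\<dots> < d"
      using bin_low[of i] bin_low[of j] bin_high[of i] bin_high[of j] ij(3)
      by (simp add: algebra_simps abs_less_iff)
    finally show False
      by simp
  qed
  then have "card G = card (bin ` G)"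
    by (simp add: card_image)
  also have "\<dots> \<le> card {..<N}"
  proof (rule card_mono)
    have "bin i < N" for i
    proof -
      have "real (bin i) * d < 1"
        using bin_low[of i] frac_lt_1[of "\<phi> i"] by linarith
      then have "real (bin i) < 1 / d"
        using d by (simp add: pos_less_divide_eq)
      then show ?thesis
        unfolding N_def by linarith
    qed
    then show "bin ` G \<subseteq> {..<N}"
      by auto
  qed simp
  finally have "real (card G) \<le> real N"
    by simp
  also have "real N = of_int \<lceil>1 / d\<rceil>"
    unfolding N_def using d by simp
  finally show ?thesis
    by linarith
qed

lemma dist_int_grid_ge:
  fixes i k m :: nat
  assumes "i < m" "k < m" "i \<noteq> k"
  shows "1 / real m \<le> dist_int (real i / real m - real k / real m)"
proof -
  define r where "r = round (real i / real m - real k / real m)"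
  have m: "real m > 0"
    using assms by simp
  have "real i / real m - real k / real m - of_int r = of_int (int i - int k - r * int m) / real m"
    using m by (simp add: field_simps)
  then have dist_eq: "dist_int (real i / real m - real k / real m) = \<bar>of_int (int i - int k - r * int m)\<bar> / real m"
    using m by (simp add: dist_int_def r_def)
  have "int i - int k - r * int m \<noteq> 0"
  proof (cases "r = 0")
    case False
    then have "1 \<le> \<bar>r\<bar>"
      by linarith
    then have "int m \<le> \<bar>r\<bar> * int m"
      by (simp add: mult_le_cancel_right1)
    moreover have "\<bar>int i - int k\<bar> < int m"
      using assms by auto
    ultimately show ?thesis
      by (auto simp: abs_mult)
  qed (use assms in simp)
  then have "1 \<le> \<bar>of_int (int i - int k - r * int m) :: real\<bar>"
    by linarith
  then show ?thesis
    unfolding dist_eq using m by (simp add: divide_right_mono)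
qed

lemma dT2_grid_ge:
  fixes i j k l m :: nat
  assumes "i < m" "j < m" "k < m" "l < m" "(i, j) \<noteq> (k, l)"
  shows "1 / real m \<le> dT2 (real i / real m, real j / real m) (real k / real m, real l / real m)"
proof (cases "i = k")
  case True
  then have "1 / real m \<le> dist_int (real j / real m - real l / real m)"
    using assms by (intro dist_int_grid_ge) auto
  then show ?thesis
    using dT2_ge_snd[of "(real i / real m, real j / real m)" "(real k / real m, real l / real m)"]
    by (simp add: dT1_eq_dist_int)
next
  case False
  then have "1 / real m \<le> dist_int (real i / real m - real k / real m)"
    using assms by (intro dist_int_grid_ge) auto
  then show ?thesis
    using dT2_ge_fst[of "(real i / real m, real j / real m)" "(real k / real m, real l / real m)"]
    by (simp add: dT1_eq_dist_int)
qed

definition circle_length_const :: "real \<Rightarrow> real" where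
  "circle_length_const C = 2*C*(4+3*C) + 16*C*(3+3*C) + 2 + 64*C^2*(3+3*C)^2"

text \<open>If \<open>L\<close> were large, \<open>\<tau> \<ge> L/(2C) - A\<close> would force \<open>m \<ge> L/(8 C g E)\<close> with \<open>g = 3 + 3C\<close>,
  contradicting \<open>m\<^sup>2 \<le> L/(2E) + 1\<close>.\<close>

lemma circle_length_bound_arith:
  fixes C E A L \<tau> m :: real
  assumes C: "C > 0" and E: "E \<ge> 1" "A \<le> E" and A: "A \<ge> 0" and L: "L > 0"
    and tau: "\<tau> \<ge> L/(2*C) - A" and m0: "m \<ge> 0" and m1: "m \<ge> \<tau> / (3*A + 3*C*E) - 1"
    and m2: "m^2 \<le> L/(2*E) + 1"
  shows "L \<le> circle_length_const C * E"
proof (rule ccontr)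
  assume "\<not> ?thesis"
  then have big: "L > circle_length_const C * E" by simp
  define g where "g = 3 + 3*C"
  have g: "g \<ge> 3" "g > 0" using C by (auto simp: g_def)
  have E0: "E > 0" using E by simp
  have parts: "circle_length_const C * E \<ge> 16*C*g*E" "circle_length_const C * E \<ge> 2*E" "circle_length_const C * E \<ge> 64*C^2*g^2*E"
    using C E0 unfolding circle_length_const_def g_def by (simp_all add: algebra_simps mult_nonneg_nonneg)
  have L1: "L \<ge> 16*C*g*E" "L \<ge> 2*E" "L > 64*C^2*g^2*E" using big parts by linarith+
  have CE: "C * E > 0" using C E0 by simp
  have G0: "3*A + 3*C*E \<le> g*E" "3*A + 3*C*E > 0"
    using E A CE unfolding g_def by (simp_all add: algebra_simps)
  have "4*C*E \<le> 16*C*g*E" using C g E0 by (simp add: mult_right_mono)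
  then have L4: "L \<ge> 4*C*E" using L1 by linarith
  have "E \<le> L/(4*C)" using L4 C by (simp add: field_simps)
  then have "L/(4*C) \<le> L/(2*C) - E" using C by (simp add: field_simps)
  then have tau4: "\<tau> \<ge> L/(4*C)" using tau E by linarith
  have pos4: "L/(4*C) > 0" using L C by simp
  have gE: "0 \<le> g*E" using g E0 by simp
  have "L/(4*C) / (g*E) \<le> \<tau> / (g*E)" by (rule divide_right_mono[OF tau4 gE])
  also have "\<tau> / (g*E) \<le> \<tau> / (3*A + 3*C*E)"
    using G0 tau4 pos4 by (intro divide_left_mono) (auto simp: g)
  finally have "L/(4*C*g*E) \<le> \<tau> / (3*A + 3*C*E)" by (simp add: field_simps)
  then have m3: "m \<ge> L/(4*C*g*E) - 1" using m1 by linarith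
  have "16*C*g*E/(8*C*g*E) \<le> L/(8*C*g*E)" using L1 C g E0 by (intro divide_right_mono) auto
  then have two: "L/(8*C*g*E) \<ge> 2" using C g E0 by simp
  have "L/(4*C*g*E) = 2 * (L/(8*C*g*E))" by (simp add: field_simps)
  then have m4: "m \<ge> L/(8*C*g*E)" using m3 two by linarith
  have "(L/(8*C*g*E))^2 \<le> m^2" using m4 two by (intro power_mono) auto
  also have "\<dots> \<le> L/(2*E) + 1" by (rule m2)
  also have "\<dots> \<le> L/E" using L1 E0 by (simp add: field_simps)
  finally have "(L/(8*C*g*E))^2 \<le> L/E" .
  then have "L^2 / (64*C^2*g^2*E^2) \<le> L/E" by (simp add: power_divide power_mult_distrib)
  then have "L^2 \<le> L/E * (64*C^2*g^2*E^2)" using C g E0 by (simp add: pos_divide_le_eq)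
  also have "\<dots> = L * (64*C^2*g^2*E)" using E0 by (simp add: power2_eq_square field_simps)
  finally have "L * L \<le> L * (64*C^2*g^2*E)" by (simp add: power2_eq_square)
  then have "L \<le> 64*C^2*g^2*E" using L by simp
  then show False using L1 by linarith
qed


text \<open>A circle of length \<open>L\<close>, wrapped \<open>n\<close> times and perturbed by an additive error \<open>E\<close>, cannot
  be \<open>(C, A)\<close>-quasi-isometric to a flat torus unless \<open>L = O(E)\<close>: the torus must be large, so it
  contains about \<open>(L/E)\<^sup>2\<close> points at mutual distance \<open>\<ge> 3CE\<close>, whose preimages would be
  \<open>2E/L\<close>-separated points on a circle.\<close>

locale circle_qi_torus =
  fixes dX :: "real \<Rightarrow> real \<Rightarrow> real" and f :: "real \<Rightarrow> real \<times> real"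
    and C A \<tau> n L E :: real
  assumes C: "C > 0" and A: "A \<ge> 0" and \<tau>: "\<tau> > 0" and n: "n \<ge> 1" and L: "L > 0"
    and E: "A \<le> E" "1 \<le> E"
    and qi: "quasi_isometry T1 dX T2 (\<lambda>p q. \<tau> * dT2 p q) C A f"
    and dX_bounds: "\<And>x y. x \<in> T1 \<Longrightarrow> y \<in> T1 \<Longrightarrow>
      L * dist_int (n * (x - y)) \<le> dX x y \<and> dX x y \<le> L * dist_int (n * (x - y)) + E"
begin

lemma qi_lower: "x \<in> T1 \<Longrightarrow> x' \<in> T1 \<Longrightarrow> dX x x' / C - A \<le> \<tau> * dT2 (f x) (f x')"
  and qi_upper: "x \<in> T1 \<Longrightarrow> x' \<in> T1 \<Longrightarrow> \<tau> * dT2 (f x) (f x') \<le> C * dX x x' + A"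
  and qi_dense: "y \<in> T2 \<Longrightarrow> \<exists>x\<in>T1. \<tau> * dT2 (f x) y \<le> A"
  using qi unfolding quasi_isometry_def by auto

lemma torus_scale_ge: "L / (2 * C) - A \<le> \<tau>"
proof -
  define y0 where "y0 = 1 / (2 * n)"
  have y0: "y0 \<in> T1" and origin: "0 \<in> T1"
    using n by (auto simp: y0_def T1_def field_simps)
  have "n * (0 - y0) = - (1/2)"
    using n by (simp add: y0_def field_simps)
  then have half: "dist_int (n * (0 - y0)) = 1/2"
    by (simp only: dist_int_minus_half)
  have "L * (1/2) \<le> dX 0 y0"
    using dX_bounds[OF origin y0] unfolding half by blast
  then have "L / 2 \<le> dX 0 y0"
    by simp
  then have "L / (2 * C) - A \<le> dX 0 y0 / C - A"
    using C by (simp add: divide_right_mono flip: divide_divide_eq_left)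
  also have "\<dots> \<le> \<tau> * dT2 (f 0) (f y0)"
    by (rule qi_lower[OF origin y0])
  also have "\<dots> \<le> \<tau>"
    using dT2_le_1[of "f 0" "f y0"] \<tau> by simp
  finally show ?thesis .
qed

lemma grid_preimages_separated:
  assumes "x \<in> T1" "x' \<in> T1" "1 / m \<le> dT2 g g'"
    and "\<tau> * dT2 (f x) g \<le> A" "\<tau> * dT2 (f x') g' \<le> A"
    and spacing: "3 * A + 3 * C * E \<le> \<tau> / m"
  shows "2 * E / L \<le> dist_int (n * x - n * x')"
proof -
  have "\<tau> / m \<le> \<tau> * dT2 g g'"
    using mult_left_mono[OF assms(3), of \<tau>] \<tau> by simp
  also have "\<dots> \<le> \<tau> * dT2 (f x) g + \<tau> * dT2 (f x) (f x') + \<tau> * dT2 (f x') g'"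
  proof -
    have "dT2 g g' \<le> dT2 (f x) g + dT2 (f x) (f x') + dT2 (f x') g'"
      using dT2_triangle[of g g' "f x"] dT2_triangle[of "f x" g' "f x'"] dT2_sym[of g "f x"] by linarith
    then show ?thesis
      using \<tau> by (simp add: distrib_left[symmetric])
  qed
  also have "\<dots> \<le> 3 * A + C * dX x x'"
    using assms(4,5) qi_upper[OF assms(1,2)] by linarith
  finally have "C * (3 * E) \<le> C * dX x x'"
    using spacing by (simp add: algebra_simps)
  then have "2 * E \<le> L * dist_int (n * (x - x'))"
    using dX_bounds[OF assms(1,2)] C by (simp add: mult_le_cancel_left_pos)
  then show ?thesis
    using L by (simp add: pos_divide_le_eq mult.commute right_diff_distrib)
qed

lemma grid_packing:
  assumes m: "m \<ge> 1" and spacing: "3 * A + 3 * C * E \<le> \<tau> / real m"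
  shows "(real m)\<^sup>2 \<le> L / (2 * E) + 1"
proof -
  define grid where "grid = {0..<m} \<times> {0..<m}"
  define point where "point = (\<lambda>(i, j). (real i / real m, real j / real m))"
  have "point ij \<in> T2" if "ij \<in> grid" for ij
    using that m unfolding grid_def point_def T2_def by (auto simp: field_simps)
  then have "\<forall>ij\<in>grid. \<exists>x\<in>T1. \<tau> * dT2 (f x) (point ij) \<le> A"
    using qi_dense by blast
  then obtain pre where pre: "\<And>ij. ij \<in> grid \<Longrightarrow> pre ij \<in> T1 \<and> \<tau> * dT2 (f (pre ij)) (point ij) \<le> A"
    by metis
  have sep: "2 * E / L \<le> dist_int (n * pre ij - n * pre kl)"
    if "ij \<in> grid" "kl \<in> grid" "ij \<noteq> kl" for ij kl
  proof (rule grid_preimages_separated)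
    show "1 / real m \<le> dT2 (point ij) (point kl)"
      using that by (cases ij, cases kl) (auto simp: grid_def point_def intro!: dT2_grid_ge)
  qed (use pre that spacing in auto)
  have "real (card grid) \<le> 1 / (2 * E / L) + 1"
    using E L sep by (intro card_le_if_separated_mod_1[of "2 * E / L" grid "\<lambda>ij. n * pre ij"]) auto
  then show ?thesis
    by (simp add: grid_def power2_eq_square)
qed

lemma length_bound: "L \<le> circle_length_const C * E"
proof -
  define spacing where "spacing = 3 * A + 3 * C * E"
  have spacing_pos: "spacing > 0"
    using A C E unfolding spacing_def by (simp add: add_nonneg_pos)
  show ?thesis
  proof (cases "\<tau> < spacing")
    case True
    then have "L / (2 * C) < spacing + A"
      using torus_scale_ge by linarith
    then have "L < 2 * C * (spacing + A)"
      using C by (simp add: field_simps)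
    also have "\<dots> \<le> 2 * C * ((4 + 3 * C) * E)"
      unfolding spacing_def using E C by (simp add: algebra_simps)
    also have "\<dots> \<le> circle_length_const C * E"
      unfolding circle_length_const_def using C E by (simp add: algebra_simps mult_nonneg_nonneg)
    finally show ?thesis
      by simp
  next
    case False
    define m where "m = nat \<lfloor>\<tau> / spacing\<rfloor>"
    have m_floor: "real m = of_int \<lfloor>\<tau> / spacing\<rfloor>"
      using False spacing_pos unfolding m_def by simp
    have "1 \<le> \<tau> / spacing"
      using False spacing_pos by simp
    then have "1 \<le> real m"
      unfolding m_floor by (simp add: le_floor_iff)
    then have m: "m \<ge> 1"
      by simp
    have "real m \<le> \<tau> / spacing"
      using m_floor by simp
    then have "spacing \<le> \<tau> / real m"
      using m spacing_pos by (simp add: field_simps)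
    have "\<tau> / spacing - 1 \<le> real m"
      using m_floor real_of_int_floor_add_one_gt[of "\<tau> / spacing"] by linarith
    with grid_packing[OF m \<open>spacing \<le> \<tau> / real m\<close>[unfolded spacing_def]]
    show ?thesis
      by (intro circle_length_bound_arith[OF C E(2,1) A L torus_scale_ge]) (auto simp: spacing_def)
  qed
qed

end

section \<open>Necessity of bounded partial quotients\<close>

locale warped_cone_qi_family =
  fixes \<alpha> C A :: real
  assumes C: "C > 0" and A: "A \<ge> 0"
    and family: "\<And>t. t > 0 \<Longrightarrow>
      \<exists>\<tau> f. \<tau> > 0 \<and> quasi_isometry T1 (warped_dist \<alpha> t) T2 (\<lambda>p q. \<tau> * dT2 p q) C A f"
begin

lemma approximation_bound:
  fixes n p :: int
  assumes t: "t > 0" and n: "n \<ge> 1" and coprime: "coprime p n"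
    and approx: "t * \<bar>of_int n * \<alpha> - of_int p\<bar> \<le> of_int n"
  shows "t / of_int n \<le> circle_length_const C * (2 * of_int n + A + 1)"
proof -
  obtain \<tau> f where \<tau>: "\<tau> > 0"
    and qi: "quasi_isometry T1 (warped_dist \<alpha> t) T2 (\<lambda>p q. \<tau> * dT2 p q) C A f"
    using family[OF t] by blast
  interpret circle_qi_torus "warped_dist \<alpha> t" f C A \<tau> "of_int n" "t / of_int n" "2 * of_int n + A + 1"
  proof
    show "real_of_int n \<ge> 1" "t / of_int n > 0"
      using t n by simp_all
    show "A \<le> 2 * of_int n + A + 1" "1 \<le> 2 * of_int n + A + 1"
      using n A by simp_all
    fix x y assume xy: "x \<in> T1" "y \<in> T1"
    have "t / of_int n * dist_int (of_int n * (x - y)) \<le> warped_dist \<alpha> t x y"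
      by (rule warped_dist_ge_covering[OF t n approx xy])
    moreover have "warped_dist \<alpha> t x y \<le> t / of_int n * dist_int (of_int n * (x - y)) + 2 * of_int n"
      by (rule warped_dist_le_covering[OF t n coprime approx xy])
    ultimately show "t / of_int n * dist_int (of_int n * (x - y)) \<le> warped_dist \<alpha> t x y \<and>
        warped_dist \<alpha> t x y \<le> t / of_int n * dist_int (of_int n * (x - y)) + (2 * of_int n + A + 1)"
      using A by linarith
  qed (fact C A \<tau> qi)+
  show ?thesis
    by (rule length_bound)
qed

lemma circle_length_const_nonneg: "0 \<le> circle_length_const C"
  using C unfolding circle_length_const_def by simp

text \<open>For \<open>\<alpha> = a/b\<close> the approximation \<open>a/b\<close> is exact, so \<open>t\<close> may be arbitrarily large.\<close>

lemma irrational: "\<alpha> \<notin> \<rat>"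
proof
  assume "\<alpha> \<in> \<rat>"
  then obtain a b where b: "b > 0" and coprime: "coprime a b" and ab: "\<alpha> = of_int a / of_int b"
    by (rule Rats_cases')
  define bound where "bound = circle_length_const C * (2 * of_int b + A + 1)"
  have "bound \<ge> 0"
    unfolding bound_def using circle_length_const_nonneg A b by simp
  then have "of_int b * (bound + 1) / of_int b \<le> bound"
    using approximation_bound[of "of_int b * (bound + 1)" b a] b coprime ab
    by (simp add: bound_def)
  then show False
    using b by simp
qed

lemma cf_coeff_Suc_le: "real_of_int (cf_coeff \<alpha> (Suc k)) \<le> circle_length_const C * (3 + A)"
proof -
  let ?n = "cf_den \<alpha> (Suc k)" and ?p = "cf_num \<alpha> (Suc k)" and ?err = "cf_err \<alpha> (Suc k)"
  define B where "B = circle_length_const C * (3 + A)"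
  have B: "B \<ge> 0"
    unfolding B_def using circle_length_const_nonneg A by simp
  have n: "?n \<ge> 1"
    by (rule cf_den_Suc_pos[OF irrational])
  have err: "\<bar>?err\<bar> > 0"
    using cf_err_nonzero[OF irrational] by simp
  define t where "t = of_int ?n / \<bar>?err\<bar>"
  have "1 / \<bar>?err\<bar> = t / of_int ?n"
    using n by (simp add: t_def)
  also have "\<dots> \<le> circle_length_const C * (2 * of_int ?n + A + 1)"
    using n err by (intro approximation_bound[of t ?n ?p] coprime_cf_num_den[OF irrational])
      (auto simp: t_def cf_err_def)
  also have "\<dots> \<le> circle_length_const C * ((3 + A) * of_int ?n)"
  proof (rule mult_left_mono[OF _ circle_length_const_nonneg])
    have "A + 1 \<le> (A + 1) * of_int ?n"
      using n A by (simp add: mult_le_cancel_left1)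
    then show "2 * of_int ?n + A + 1 \<le> (3 + A) * of_int ?n"
      by (simp add: algebra_simps)
  qed
  finally have "1 \<le> B * (of_int ?n * \<bar>?err\<bar>)"
    using err by (simp add: B_def pos_divide_le_eq ac_simps)
  then have "cf_rem \<alpha> (Suc k) \<le> cf_rem \<alpha> (Suc k) * (B * (of_int ?n * \<bar>?err\<bar>))"
    using cf_rem_Suc_gt_1[OF irrational, of k] by (simp add: mult_le_cancel_left1)
  also have "\<dots> = B * (of_int ?n * \<bar>?err\<bar> * cf_rem \<alpha> (Suc k))"
    by (simp add: ac_simps)
  also have "\<dots> \<le> B"
    using mult_left_mono[OF cf_den_mult_err_mult_rem_le[OF irrational, of k] B] by simp
  finally show ?thesis
    unfolding cf_coeff_def B_def by linarith
qed

end

lemma warped_cone_QI_tori_imp_family: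
  assumes "warped_cone_QI_tori \<alpha>"
  obtains C A where "warped_cone_qi_family \<alpha> C A"
proof -
  obtain I C A where C: "C > 0" and A: "A \<ge> 0" and I: "fst ` I = {0<..}" "snd ` I = {0<..}"
    and qi: "\<forall>(t, \<tau>)\<in>I. \<exists>f. quasi_isometry T1 (warped_dist \<alpha> t) T2 (\<lambda>p q. \<tau> * dT2 p q) C A f"
    using assms unfolding warped_cone_QI_tori_def by blast
  have "\<exists>\<tau> f. \<tau> > 0 \<and> quasi_isometry T1 (warped_dist \<alpha> t) T2 (\<lambda>p q. \<tau> * dT2 p q) C A f"
    if "t > 0" for t
  proof -
    have "t \<in> fst ` I"
      using that I(1) by simp
    then obtain \<tau> where "(t, \<tau>) \<in> I"
      by force
    moreover from this have "\<tau> > 0"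
      using I(2) by force
    ultimately show ?thesis
      using qi by blast
  qed
  then show ?thesis
    using C A by (intro that[of C A]) (simp add: warped_cone_qi_family_def)
qed

lemma warped_cone_QI_tori_imp_restricted:
  assumes "0 < \<alpha>" "\<alpha> < 1" "warped_cone_QI_tori \<alpha>"
  shows "restricted_irrational \<alpha>"
proof -
  obtain C A where "warped_cone_qi_family \<alpha> C A"
    using warped_cone_QI_tori_imp_family[OF assms(3)] .
  then interpret warped_cone_qi_family \<alpha> C A .
  have "cf_coeff \<alpha> 0 = 0"
    unfolding cf_coeff_def using assms(1,2) by (simp add: floor_eq_iff)
  moreover have "\<bar>cf_coeff \<alpha> (Suc k)\<bar> \<le> \<lceil>circle_length_const C * (3 + A)\<rceil>" for k
    using cf_coeff_Suc_le[of k] cf_coeff_Suc_ge_1[OF irrational, of k] by (simp add: le_ceiling_iff)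
  moreover have "0 \<le> \<lceil>circle_length_const C * (3 + A)\<rceil>"
    using mult_nonneg_nonneg[OF circle_length_const_nonneg, of "3 + A"] A by linarith
  ultimately have "\<bar>cf_coeff \<alpha> k\<bar> \<le> \<lceil>circle_length_const C * (3 + A)\<rceil>" for k
    by (cases k) simp_all
  then show ?thesis
    unfolding restricted_irrational_def using irrational by blast
qed

section \<open>Sufficiency of bounded partial quotients\<close>

lemma dist_int_mult_frac_diff:
  "m \<in> \<int> \<Longrightarrow> dist_int (m * frac z - y) = dist_int (m * z - y)"
  using dist_int_diff_Ints[of "m * of_int \<lfloor>z\<rfloor>" "m * z - y"] by (simp add: frac_def algebra_simps)

text \<open>The map \<open>x \<mapsto> (q x, q' x)\<close> turns the warped metric with parameter \<open>s\<^sup>2\<close> into the flat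
  metric of \<open>T\<^sup>2\<close> scaled by \<open>s\<close>: a rotation step moves the image by \<open>(q\<alpha>, q'\<alpha>) \<equiv> (\<delta>, \<delta>')\<close> with
  \<open>|\<delta>|, |\<delta>'| \<le> 1/s\<close>, and since \<open>q p' - q' p = \<plusminus>1\<close>, two points with close images differ by
  few rotation steps plus a short slide.\<close>

locale consecutive_convergents =
  fixes \<alpha> s B :: real and q p q' p' \<sigma> :: int
  assumes s: "1 \<le> s" and B: "1 \<le> B" and q: "1 \<le> q" "q \<le> s" and q': "s < q'" "q' \<le> (B + 1) * s"
    and approx: "q' * \<bar>q * \<alpha> - p\<bar> \<le> 1" "q' * \<bar>q' * \<alpha> - p'\<bar> \<le> 1"
    and det: "q' * p - q * p' = \<sigma>" and \<sigma>: "\<sigma> = 1 \<or> \<sigma> = -1"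
begin

definition \<delta> :: real where "\<delta> = of_int q * \<alpha> - of_int p"
definition \<delta>' :: real where "\<delta>' = of_int q' * \<alpha> - of_int p'"
definition torus_map :: "real \<Rightarrow> real \<times> real" where
  "torus_map x = (frac (of_int q * x), frac (of_int q' * x))"

lemma s_pos: "s > 0"
  using s by simp

lemma abs_\<delta>_le: "\<bar>\<delta>\<bar> \<le> 1 / s" and abs_\<delta>'_le: "\<bar>\<delta>'\<bar> \<le> 1 / s"
proof -
  have q'_pos: "real_of_int q' > 0"
    using q' s by linarith
  have "1 / real_of_int q' \<le> 1 / s"
    using q' s_pos by (simp add: frac_le)
  moreover have "\<bar>\<delta>\<bar> \<le> 1 / real_of_int q'" "\<bar>\<delta>'\<bar> \<le> 1 / real_of_int q'"
    using approx q'_pos unfolding \<delta>_def \<delta>'_def by (simp_all add: pos_le_divide_eq mult.commute)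
  ultimately show "\<bar>\<delta>\<bar> \<le> 1 / s" "\<bar>\<delta>'\<bar> \<le> 1 / s"
    by linarith+
qed

lemma \<sigma>_sq: "real_of_int \<sigma> * real_of_int \<sigma> = 1"
  using \<sigma> by auto

lemma \<delta>_det: "real_of_int q * \<delta>' - real_of_int q' * \<delta> = real_of_int \<sigma>"
proof -
  have "real_of_int q * \<delta>' - real_of_int q' * \<delta> = of_int (q' * p - q * p')"
    unfolding \<delta>_def \<delta>'_def by (simp add: algebra_simps)
  then show ?thesis
    using det by simp
qed

lemma dT2_torus_map:
  "dT2 (torus_map x) (torus_map y) = sqrt ((dist_int (of_int q * (x - y)))\<^sup>2 + (dist_int (of_int q' * (x - y)))\<^sup>2)"
  unfolding torus_map_def dT2_frac_frac by (simp add: algebra_simps)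

lemma dT2_torus_map_le: "dT2 (torus_map x) (torus_map y) \<le> dist_int (of_int q * (x - y)) + dist_int (of_int q' * (x - y))"
  unfolding dT2_torus_map by (rule sqrt_sum_squares_le_sum) (simp_all add: dist_int_nonneg)

lemma dT2_torus_map_ge: "dist_int (of_int q * (x - y)) + dist_int (of_int q' * (x - y)) \<le> 2 * dT2 (torus_map x) (torus_map y)"
  unfolding dT2_torus_map
  using real_sqrt_sum_squares_ge1[of "dist_int (of_int q * (x - y))" "dist_int (of_int q' * (x - y))"]
    real_sqrt_sum_squares_ge2[of "dist_int (of_int q' * (x - y))" "dist_int (of_int q * (x - y))"]
  by linarith

text \<open>Writing \<open>q z = A\<^sub>1 + a\<close>, \<open>q' z = A\<^sub>2 + b\<close> with \<open>A\<^sub>1, A\<^sub>2\<close> integers, the identity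
  \<open>q \<delta>' - q' \<delta> = \<sigma>\<close> shows \<open>z \<equiv> - j \<alpha> + \<sigma> (\<delta>' a - \<delta> b)\<close> with \<open>j = - \<sigma> (q' A\<^sub>1 - q A\<^sub>2)\<close>.\<close>

lemma exists_short_jump:
  "\<exists>j::int. \<bar>of_int j\<bar> \<le> (B + 1) * s * (dist_int (of_int q * z) + dist_int (of_int q' * z)) \<and>
     dist_int (z + j * \<alpha>) \<le> (dist_int (of_int q * z) + dist_int (of_int q' * z)) / s"
proof -
  define A1 where "A1 = round (of_int q * z)"
  define A2 where "A2 = round (of_int q' * z)"
  define a where "a = of_int q * z - A1"
  define b where "b = of_int q' * z - A2"
  define j where "j = - \<sigma> * (q' * A1 - q * A2)"
  have abs_a: "\<bar>a\<bar> = dist_int (of_int q * z)" and abs_b: "\<bar>b\<bar> = dist_int (of_int q' * z)"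
    by (simp_all add: a_def A1_def b_def A2_def dist_int_def)
  have "\<delta>' * (of_int q * z) - \<delta> * (of_int q' * z) = z * (of_int q * \<delta>' - of_int q' * \<delta>)"
    by (simp add: algebra_simps)
  then have "of_int \<sigma> * z = \<delta>' * (of_int A1 + a) - \<delta> * (of_int A2 + b)"
    unfolding \<delta>_det by (simp add: a_def b_def)
  also have "\<dots> = \<alpha> * of_int (q' * A1 - q * A2) - of_int (p' * A1 - p * A2) + (\<delta>' * a - \<delta> * b)"
    unfolding \<delta>_def \<delta>'_def by (simp add: algebra_simps)
  finally have \<sigma>z: "of_int \<sigma> * z = \<alpha> * of_int (q' * A1 - q * A2) - of_int (p' * A1 - p * A2) + (\<delta>' * a - \<delta> * b)" .
  have "z = of_int \<sigma> * (of_int \<sigma> * z)"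
    using \<sigma>_sq by (simp add: mult.assoc[symmetric])
  also have "\<dots> = of_int \<sigma> * (\<alpha> * of_int (q' * A1 - q * A2) - of_int (p' * A1 - p * A2) + (\<delta>' * a - \<delta> * b))"
    unfolding \<sigma>z ..
  finally have "z + j * \<alpha> = of_int \<sigma> * (\<delta>' * a - \<delta> * b) - of_int (\<sigma> * (p' * A1 - p * A2))"
    unfolding j_def by (simp add: algebra_simps)
  then have "dist_int (z + j * \<alpha>) = dist_int (of_int \<sigma> * (\<delta>' * a - \<delta> * b))"
    by (simp add: dist_int_diff_Ints)
  also have "\<dots> \<le> \<bar>of_int \<sigma> * (\<delta>' * a - \<delta> * b)\<bar>"
    by (rule dist_int_le_abs)
  also have "\<dots> = \<bar>\<delta>' * a - \<delta> * b\<bar>"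
    using \<sigma> by (auto simp: abs_mult)
  also have "\<dots> \<le> \<bar>\<delta>'\<bar> * \<bar>a\<bar> + \<bar>\<delta>\<bar> * \<bar>b\<bar>"
    using abs_triangle_ineq4[of "\<delta>' * a" "\<delta> * b"] by (simp add: abs_mult)
  also have "\<dots> \<le> (1 / s) * \<bar>a\<bar> + (1 / s) * \<bar>b\<bar>"
    using abs_\<delta>_le abs_\<delta>'_le by (intro add_mono mult_right_mono) auto
  finally have short: "dist_int (z + j * \<alpha>) \<le> (\<bar>a\<bar> + \<bar>b\<bar>) / s"
    by (simp add: add_divide_distrib)
  have "of_int (q' * A1 - q * A2) = of_int q * b - of_int q' * a"
    unfolding a_def b_def by (simp add: algebra_simps)
  then have "\<bar>of_int j\<bar> = \<bar>of_int q * b - of_int q' * a\<bar>"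
    unfolding j_def using \<sigma> by (auto simp: abs_mult)
  also have "\<dots> \<le> of_int q * \<bar>b\<bar> + of_int q' * \<bar>a\<bar>"
    using abs_triangle_ineq4[of "of_int q * b" "of_int q' * a"] q q' s by (simp add: abs_mult)
  also have "\<dots> \<le> ((B + 1) * s) * \<bar>b\<bar> + ((B + 1) * s) * \<bar>a\<bar>"
    using q q' B s by (intro add_mono mult_right_mono) (auto simp: algebra_simps)
  finally show ?thesis
    using short unfolding abs_a abs_b by (intro exI[of _ j]) (simp add: algebra_simps)
qed

lemma warped_dist_le_torus:
  assumes "x \<in> T1" "y \<in> T1"
  shows "warped_dist \<alpha> (s\<^sup>2) x y \<le> 2 * (B + 2) * s * dT2 (torus_map x) (torus_map y)"
proof -
  let ?d = "dist_int (of_int q * (x - y)) + dist_int (of_int q' * (x - y))"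
  obtain j :: int where j: "\<bar>of_int j\<bar> \<le> (B + 1) * s * ?d"
    and short: "dist_int (x - y + j * \<alpha>) \<le> ?d / s"
    using exists_short_jump[of "x - y"] by blast
  have "warped_dist \<alpha> (s\<^sup>2) x y \<le> \<bar>of_int j\<bar> + s\<^sup>2 * dist_int (x + j * \<alpha> - y)"
    using s_pos assms by (intro warped_dist_le_jump) auto
  also have "\<dots> \<le> (B + 1) * s * ?d + s\<^sup>2 * (?d / s)"
    using j short by (intro add_mono mult_left_mono) (auto simp: algebra_simps)
  also have "\<dots> = (B + 2) * s * ?d"
    using s_pos by (simp add: power2_eq_square field_simps)
  also have "\<dots> \<le> (B + 2) * s * (2 * dT2 (torus_map x) (torus_map y))"
    using dT2_torus_map_ge B s_pos by (intro mult_left_mono) auto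
  finally show ?thesis
    by (simp add: algebra_simps)
qed

lemma pullback_admissible:
  "warp_admissible_pseudo \<alpha> (s\<^sup>2) (\<lambda>x y. s * dT2 (torus_map x) (torus_map y) / (B + 2))"
  unfolding warp_admissible_pseudo_def
proof (intro conjI ballI)
  fix x y
  show "0 \<le> s * dT2 (torus_map x) (torus_map y) / (B + 2)"
    using s_pos B dT2_nonneg by simp
  show "s * dT2 (torus_map x) (torus_map y) / (B + 2) = s * dT2 (torus_map y) (torus_map x) / (B + 2)"
    using dT2_sym by simp
  have scaled_le: "dist_int (of_int m * w) \<le> r * dist_int w" if "\<bar>of_int m\<bar> \<le> r" for m :: int and r w
    using dist_int_mult_Ints_le[of "of_int m" w] mult_right_mono[OF that dist_int_nonneg[of w]] by simp
  have lipschitz: "dist_int (of_int q * w) + dist_int (of_int q' * w) \<le> (B + 2) * s * dist_int w" for w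
    using scaled_le[of q s w] scaled_le[of q' "(B + 1) * s" w] q q' s by (simp add: algebra_simps)
  have "s * dT2 (torus_map x) (torus_map y) \<le> s * ((B + 2) * s * dist_int (x - y))"
    using order_trans[OF dT2_torus_map_le lipschitz] s_pos by (intro mult_left_mono) auto
  then show "s * dT2 (torus_map x) (torus_map y) / (B + 2) \<le> s\<^sup>2 * dT1 x y"
    using B by (simp add: pos_divide_le_eq power2_eq_square dT1_eq_dist_int algebra_simps)
next
  fix x y z
  show "s * dT2 (torus_map x) (torus_map z) / (B + 2)
      \<le> s * dT2 (torus_map x) (torus_map y) / (B + 2) + s * dT2 (torus_map y) (torus_map z) / (B + 2)"
    using dT2_triangle[of "torus_map x" "torus_map z" "torus_map y"] s_pos B
    by (simp add: add_divide_distrib[symmetric] divide_right_mono distrib_left[symmetric])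
next
  fix z
  have step: "s * dT2 (torus_map z) (torus_map (frac (z + c))) / (B + 2) \<le> 1" if c: "c = \<alpha> \<or> c = - \<alpha>" for c
  proof -
    have "dist_int (of_int q * (z - frac (z + c))) = dist_int \<delta>"
      "dist_int (of_int q' * (z - frac (z + c))) = dist_int \<delta>'"
      unfolding \<delta>_def \<delta>'_def using c by (simp_all add: dist_int_mult_rotation_step)
    then have "dT2 (torus_map z) (torus_map (frac (z + c))) \<le> 2 / s"
      using dT2_torus_map_le[of z "frac (z + c)"] abs_\<delta>_le abs_\<delta>'_le dist_int_le_abs[of \<delta>]
        dist_int_le_abs[of \<delta>'] by simp
    then have "s * dT2 (torus_map z) (torus_map (frac (z + c))) \<le> 2"
      using s_pos by (simp add: field_simps)
    then show ?thesis
      using B by (simp add: pos_divide_le_eq)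
  qed
  show "s * dT2 (torus_map z) (torus_map (frac (z + \<alpha>))) / (B + 2) \<le> 1"
    "s * dT2 (torus_map z) (torus_map (frac (z - \<alpha>))) / (B + 2) \<le> 1"
    using step[of \<alpha>] step[of "- \<alpha>"] by simp_all
qed

lemma torus_le_warped_dist:
  assumes "x \<in> T1" "y \<in> T1"
  shows "s * dT2 (torus_map x) (torus_map y) \<le> (B + 2) * warped_dist \<alpha> (s\<^sup>2) x y"
  using pseudo_admissible_le_warped_dist[OF _ pullback_admissible assms] s_pos B
  by (simp add: pos_divide_le_eq mult.commute)

lemma torus_map_dense:
  assumes "y \<in> T2"
  shows "\<exists>x\<in>T1. s * dT2 (torus_map x) y \<le> 1"
proof -
  obtain y1 y2 where y: "y = (y1, y2)"
    by (cases y)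
  define N where "N = - round (of_int q' * y1 - of_int q * y2)"
  define H where "H = of_int q' * y1 - of_int q * y2 + N"
  have H: "\<bar>H\<bar> \<le> 1/2"
    using dist_int_le_half[of "of_int q' * y1 - of_int q * y2"] by (simp add: H_def N_def dist_int_def)
  text \<open>Shifting \<open>y\<close> by the integer vector \<open>N \<sigma> (p, p')\<close> makes \<open>q' Y\<^sub>1 - q Y\<^sub>2 = H\<close> small.\<close>
  define Y1 where "Y1 = y1 + of_int (N * \<sigma> * p)"
  define Y2 where "Y2 = y2 + of_int (N * \<sigma> * p')"
  have HY: "of_int q' * Y1 - of_int q * Y2 = H"
  proof -
    have "of_int q' * Y1 - of_int q * Y2 = of_int q' * y1 - of_int q * y2 + of_int (N * \<sigma> * (q' * p - q * p'))"
      unfolding Y1_def Y2_def by (simp add: algebra_simps)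
    then show ?thesis
      unfolding det H_def using \<sigma> by auto
  qed
  define z where "z = \<sigma> * (\<delta>' * Y1 - \<delta> * Y2)"
  have "of_int q * z - Y1 = \<sigma> * \<delta> * H" "of_int q' * z - Y2 = \<sigma> * \<delta>' * H"
    unfolding z_def HY[symmetric] using \<delta>_det \<sigma>_sq
    by (simp_all add: algebra_simps)
  then have "of_int q * z - y1 = \<sigma> * \<delta> * H + of_int (N * \<sigma> * p)"
    "of_int q' * z - y2 = \<sigma> * \<delta>' * H + of_int (N * \<sigma> * p')"
    by (simp_all add: Y1_def Y2_def algebra_simps)
  then have dist_eq: "dist_int (of_int q * frac z - y1) = dist_int (\<sigma> * \<delta> * H)"
    "dist_int (of_int q' * frac z - y2) = dist_int (\<sigma> * \<delta>' * H)"
    by (simp_all add: dist_int_mult_frac_diff dist_int_add_Ints)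
  have small: "dist_int (of_int \<sigma> * d * H) \<le> 1 / s * (1/2)" if "\<bar>d\<bar> \<le> 1 / s" for d :: real
  proof -
    have "\<bar>of_int \<sigma> * d * H\<bar> = \<bar>d\<bar> * \<bar>H\<bar>"
      using \<sigma> by (auto simp: abs_mult)
    also have "\<dots> \<le> 1 / s * (1/2)"
      using that H s_pos by (intro mult_mono) auto
    finally show ?thesis
      using dist_int_le_abs[of "of_int \<sigma> * d * H"] by linarith
  qed
  have "dT2 (torus_map (frac z)) y \<le> dist_int (\<sigma> * \<delta> * H) + dist_int (\<sigma> * \<delta>' * H)"
    using dT2_le_sum[of "torus_map (frac z)" y] dist_eq
    by (simp add: y torus_map_def dT1_eq_dist_int dist_int_frac_diff)
  also have "\<dots> \<le> 1 / s"
    using small[OF abs_\<delta>_le] small[OF abs_\<delta>'_le] by simp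
  finally have "dT2 (torus_map (frac z)) y \<le> 1 / s" .
  then have "s * dT2 (torus_map (frac z)) y \<le> 1"
    using s_pos by (simp add: field_simps)
  then show ?thesis
    using frac_in_T1 by blast
qed

lemma quasi_isometry_torus_map:
  "quasi_isometry T1 (warped_dist \<alpha> (s\<^sup>2)) T2 (\<lambda>a b. s * dT2 a b) (2 * (B + 2)) 2 torus_map"
  unfolding quasi_isometry_def
proof (intro conjI ballI)
  show "torus_map ` T1 \<subseteq> T2"
    unfolding torus_map_def T2_def by (auto simp: frac_lt_1)
  fix x x' assume xx': "x \<in> T1" "x' \<in> T1"
  show "warped_dist \<alpha> (s\<^sup>2) x x' / (2 * (B + 2)) - 2 \<le> s * dT2 (torus_map x) (torus_map x')"
    using warped_dist_le_torus[OF xx'] B by (simp add: pos_divide_le_eq algebra_simps)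
  have "0 \<le> warped_dist \<alpha> (s\<^sup>2) x x'"
    using warped_dist_nonneg xx' s_pos by simp
  then have "(B + 2) * warped_dist \<alpha> (s\<^sup>2) x x' \<le> 2 * (B + 2) * warped_dist \<alpha> (s\<^sup>2) x x'"
    using B by (intro mult_right_mono) auto
  then show "s * dT2 (torus_map x) (torus_map x') \<le> 2 * (B + 2) * warped_dist \<alpha> (s\<^sup>2) x x' + 2"
    using torus_le_warped_dist[OF xx'] by linarith
next
  fix y assume "y \<in> T2"
  then obtain x where "x \<in> T1" "s * dT2 (torus_map x) y \<le> 1"
    using torus_map_dense by blast
  then show "\<exists>x\<in>T1. s * dT2 (torus_map x) y \<le> 2"
    by force
qed

end

lemma exists_consecutive_cf_den:
  fixes s :: real
  assumes irrational: "\<alpha> \<notin> \<rat>" and s: "1 \<le> s"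
  shows "\<exists>k. of_int (cf_den \<alpha> (Suc k)) \<le> s \<and> s < of_int (cf_den \<alpha> (Suc (Suc k)))"
proof -
  define P where "P k \<longleftrightarrow> s < of_int (cf_den \<alpha> (Suc (Suc k)))" for k
  have "P (nat \<lceil>s\<rceil>)"
    using cf_den_Suc_ge[OF irrational, of "Suc (nat \<lceil>s\<rceil>)"] unfolding P_def by linarith
  define m where "m = (LEAST k. P k)"
  have "P m"
    unfolding m_def by (rule LeastI) fact
  moreover have "of_int (cf_den \<alpha> (Suc m)) \<le> s"
  proof (cases m)
    case (Suc k)
    then have "\<not> P k"
      using not_less_Least[of k P] unfolding m_def by simp
    then show ?thesis
      using Suc by (simp add: P_def del: cf_den.simps)
  qed (use s in simp)
  ultimately show ?thesis
    unfolding P_def by blast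
qed

lemma bounded_cf_quasi_isometry:
  assumes irrational: "\<alpha> \<notin> \<rat>" and B: "1 \<le> B" "\<And>n. real_of_int (cf_coeff \<alpha> n) \<le> B"
    and t: "t \<ge> 1"
  shows "\<exists>f. quasi_isometry T1 (warped_dist \<alpha> t) T2 (\<lambda>a b. sqrt t * dT2 a b) (2 * (B + 2)) 2 f"
proof -
  define s where "s = sqrt t"
  have s: "1 \<le> s"
    unfolding s_def using t by simp
  obtain k where k: "of_int (cf_den \<alpha> (Suc k)) \<le> s" "s < of_int (cf_den \<alpha> (Suc (Suc k)))"
    using exists_consecutive_cf_den[OF irrational s] by blast
  let ?q = "cf_den \<alpha> (Suc k)" and ?p = "cf_num \<alpha> (Suc k)"
    and ?q' = "cf_den \<alpha> (Suc (Suc k))" and ?p' = "cf_num \<alpha> (Suc (Suc k))"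
  have q: "1 \<le> ?q"
    by (rule cf_den_Suc_pos[OF irrational])
  have "real_of_int ?q' \<le> (B + 1) * of_int ?q"
    by (rule cf_den_Suc_Suc_le[OF irrational B(2)])
  also have "\<dots> \<le> (B + 1) * s"
    using k(1) B by (intro mult_left_mono) auto
  finally have q': "real_of_int ?q' \<le> (B + 1) * s" .
  have "\<bar>cf_err \<alpha> (Suc k)\<bar> * of_int ?q' \<le> 1" "\<bar>cf_err \<alpha> (Suc (Suc k))\<bar> * of_int ?q' \<le> 1"
    by (rule cf_den_Suc_mult_err_le[OF irrational], rule cf_den_mult_err_le[OF irrational])
  then have approx: "of_int ?q' * \<bar>of_int ?q * \<alpha> - of_int ?p\<bar> \<le> 1"
    "of_int ?q' * \<bar>of_int ?q' * \<alpha> - of_int ?p'\<bar> \<le> 1"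
    by (simp_all only: cf_err_def mult.commute)
  have "?q' * ?p - ?q * ?p' = (-1) ^ Suc k"
    by (rule cf_det[OF irrational])
  moreover have "((-1::int) ^ Suc k) = 1 \<or> ((-1::int) ^ Suc k) = -1"
    by (cases "even (Suc k)") (auto simp: neg_one_even_power neg_one_odd_power)
  ultimately interpret consecutive_convergents \<alpha> s B ?q ?p ?q' ?p' "(-1) ^ Suc k"
    using s B q q' k approx by unfold_locales auto
  have "s\<^sup>2 = t"
    unfolding s_def using t by simp
  then show ?thesis
    using quasi_isometry_torus_map unfolding s_def by auto
qed

text \<open>At scales \<open>t \<le> 1\<close> both spaces have bounded diameter, so a constant map will do.\<close>

lemma small_scale_quasi_isometry:
  assumes t: "0 < t" "t \<le> 1" and C: "C \<ge> 1"
  shows "quasi_isometry T1 (warped_dist \<alpha> t) T2 (\<lambda>a b. sqrt t * dT2 a b) C 2 (\<lambda>_. (0, 0))"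
  unfolding quasi_isometry_def
proof (intro conjI ballI)
  show "(\<lambda>_. (0, 0)) ` T1 \<subseteq> T2"
    by (auto simp: T2_def)
  fix x x' assume xx': "x \<in> T1" "x' \<in> T1"
  have "warped_dist \<alpha> t x x' \<le> t * dT1 x x'"
    by (rule warped_dist_le_scaled[OF t(1) xx'])
  also have "\<dots> \<le> 1 * (1/2)"
    using t dist_int_le_half dist_int_nonneg unfolding dT1_eq_dist_int by (intro mult_mono) auto
  finally have "warped_dist \<alpha> t x x' / C \<le> 2"
    using C by (simp add: divide_le_eq)
  then show "warped_dist \<alpha> t x x' / C - 2 \<le> sqrt t * dT2 (0, 0) (0, 0)"
    by (simp add: dT2_def dT1_eq_dist_int dist_int_def)
  show "sqrt t * dT2 (0, 0) (0, 0) \<le> C * warped_dist \<alpha> t x x' + 2"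
    using warped_dist_nonneg[OF t(1) xx'] C by (simp add: dT2_def dT1_eq_dist_int dist_int_def)
next
  fix y :: "real \<times> real"
  have "sqrt t * dT2 (0, 0) y \<le> 1 * 1"
    using t dT2_le_1 dT2_nonneg by (intro mult_mono) auto
  then show "\<exists>x\<in>T1. sqrt t * dT2 (0, 0) y \<le> 2"
    by (auto simp: T1_def intro!: bexI[of _ 0])
qed

lemma warped_cone_QI_toriI:
  assumes "C > 0" "A \<ge> 0"
    and "\<And>t. t > 0 \<Longrightarrow> \<exists>f. quasi_isometry T1 (warped_dist \<alpha> t) T2 (\<lambda>a b. sqrt t * dT2 a b) C A f"
  shows "warped_cone_QI_tori \<alpha>"
proof -
  define I where "I = (\<lambda>t. (t, sqrt t)) ` {0::real<..}"
  have "fst ` I = {0<..}"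
    unfolding I_def by (simp add: image_image)
  moreover have "snd ` I = {0<..}"
  proof
    show "snd ` I \<subseteq> {0<..}"
      unfolding I_def by auto
    show "{0<..} \<subseteq> snd ` I"
    proof
      fix \<tau> :: real assume "\<tau> \<in> {0<..}"
      then have "(\<tau>\<^sup>2, \<tau>) \<in> I"
        unfolding I_def by (auto intro!: image_eqI[of _ _ "\<tau>\<^sup>2"])
      then show "\<tau> \<in> snd ` I"
        by force
    qed
  qed
  ultimately show ?thesis
    unfolding warped_cone_QI_tori_def using assms by (intro exI[of _ I] exI[of _ C] exI[of _ A]) (auto simp: I_def)
qed

lemma restricted_imp_warped_cone_QI_tori:
  assumes "restricted_irrational \<alpha>"
  shows "warped_cone_QI_tori \<alpha>"
proof -
  obtain bound where irrational: "\<alpha> \<notin> \<rat>" and bound: "\<And>n. \<bar>cf_coeff \<alpha> n\<bar> \<le> bound"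
    using assms unfolding restricted_irrational_def by blast
  define B where "B = max (real_of_int bound) 1"
  have B: "1 \<le> B" "real_of_int (cf_coeff \<alpha> n) \<le> B" for n
    using bound[of n] unfolding B_def by linarith+
  have "\<exists>f. quasi_isometry T1 (warped_dist \<alpha> t) T2 (\<lambda>a b. sqrt t * dT2 a b) (2 * (B + 2)) 2 f"
    if "t > 0" for t
  proof (cases "t \<le> 1")
    case True
    then show ?thesis
      using small_scale_quasi_isometry[OF that True, of "2 * (B + 2)"] B by auto
  next
    case False
    then show ?thesis
      using bounded_cf_quasi_isometry[OF irrational B] by simp
  qed
  then show ?thesis
    using B by (intro warped_cone_QI_toriI[of "2 * (B + 2)" 2]) auto
qed

theorem theoremA1:
  fixes \<alpha> :: real
  assumes "0 < \<alpha>" and "\<alpha> < 1"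
  shows "warped_cone_QI_tori \<alpha> \<longleftrightarrow> restricted_irrational \<alpha>"
  using warped_cone_QI_tori_imp_restricted[OF assms] restricted_imp_warped_cone_QI_tori by blast

end
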